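(* Let $d\ge2$ and let $(X_n)$ be a recurrent rotor walk on $\mathbb{T}_d$ with i.i.d. random initial configuration of law $(r_j)_{0\le j\le d}$, i.e. $\mathbb{E}[\rho(v)]\ge d-1$ and $r_d>0$. Let $g_0\equiv0$ and, for $k\ge1$ and $x\in\Sigma_d^{\mathbb{N}}$, $g_k(x)=\mathbb{E}\big[f_{R_{\tau_k}}(x)\big]$. Then for every $k\ge1$, every $x=(x_1,x_2,\dots)\in\Sigma_d^{\mathbb{N}}$ and every $i\in\{0,\dots,d-1\}$, $$g_k(ix)=1+\big(1-p_{d-i}\big)\,g_{k-1}(x)+p_{d-i}\,g_k(x),$$ where $ix=(i,x_1,x_2,\dots)$ and $p_l=\sum_{j=0}^{l-1}r_j$.
   Context: Let $\widetilde{\mathbb{T}}_d$ be the rooted tree with root $r$ in which every vertex has exactly $d$ children, and let $\mathbb{T}_d$ be $\widetilde{\mathbb{T}}_d$ together with a sink vertex $o$ joined to $r$. Let $\Sigma_d=\{0,\dots,d-1\}$; identify $\widetilde{\mathbb{T}}_d$ with the set of finite words over $\Sigma_d$, the root $r$ being the empty word $\epsilon$ and the children of a word $w$ being the words $wk$, $k\in\Sigma_d$. For $v\in\widetilde{\mathbb{T}}_d$ its neighbours are labelled $v^{(0)}$ (the parent, with $r^{(0)}=o$) and $v^{(d-k)}=vk$ for $k\in\Sigma_d$. The rotor walk $(X_n)$ starts at $X_0=r$; if $X_n=v\ne o$ then $\rho(v)$ is replaced by $\rho(v)+1\pmod{d+1}$ (other rotors unchanged) and $X_{n+1}=v^{(\text{new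 value of }\rho(v))}$; if $X_n=o$ then $X_{n+1}=r$. The initial rotors $\rho(v)\in\{0,\dots,d\}$ are i.i.d. with $\mathbb{P}[\rho(v)=j]=r_j$. The range is $R_n=\{X_0,\dots,X_n\}\setminus\{o\}$, and $\tau_0=0$, $\tau_k=\inf\{n>\tau_{k-1}:X_n=o\}$. For a finite connected subset $A\subset\widetilde{\mathbb{T}}_d$ containing $\epsilon$ and an infinite sequence $x=(x_1,x_2,\dots)\in\Sigma_d^{\mathbb{N}}$ (corresponding to the $d$-ary expansion $\sum_i x_id^{-i}$ of a point of $[0,1]$), the contour of $A$ is $f_A(x)=\min\{n\ge1: x_1x_2\cdots x_n\notin A\}$. *)

theory Defs
  imports "HOL-Probability.Probability"
begin

text \<open>Vertices of the tree are finite words over {0..d-1} (nat lists, the root is []);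
  the children of w are w @ [k]. The sink o is None, a tree vertex v is Some v.
  A rotor configuration is a function rho :: nat list => nat with values in {0..d}.\<close>

type_synonym rstate = "nat list option \<times> (nat list \<Rightarrow> nat)"

definition rotor_step :: "nat \<Rightarrow> rstate \<Rightarrow> rstate" where
  "rotor_step d s = (case fst s of
      None \<Rightarrow> (Some [], snd s)
    | Some v \<Rightarrow>
        (let j = (snd s v + 1) mod (d + 1);
             rho' = (snd s)(v := j)
         in (if j = 0 then (if v = [] then None else Some (butlast v))
             else Some (v @ [d - j]), rho')))"

definition rotor_walk :: "nat \<Rightarrow> (nat list \<Rightarrow> nat) \<Rightarrow> nat \<Rightarrow> rstate" where
  "rotor_walk d rho n = (rotor_step d ^^ n) (Some [], rho)"

definition rpos :: "nat \<Rightarrow> (nat list \<Rightarrow> nat) \<Rightarrow> nat \<Rightarrow> nat list option" where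
  "rpos d rho n = fst (rotor_walk d rho n)"

definition rrange :: "nat \<Rightarrow> (nat list \<Rightarrow> nat) \<Rightarrow> nat \<Rightarrow> nat list set" where
  "rrange d rho n = {v. \<exists>m\<le>n. rpos d rho m = Some v}"

fun rtau :: "nat \<Rightarrow> (nat list \<Rightarrow> nat) \<Rightarrow> nat \<Rightarrow> nat" where
  "rtau d rho 0 = 0"
| "rtau d rho (Suc k) = (LEAST n. n > rtau d rho k \<and> rpos d rho n = None)"

text \<open>Contour f_A(x) = min{n >= 1. x_1...x_n notin A}; the sequence x = (x_1,x_2,...)
  is represented as x :: nat => nat with x_1 = x 0. Value infinity if no such n.\<close>
definition contour :: "nat list set \<Rightarrow> (nat \<Rightarrow> nat) \<Rightarrow> ennreal" where
  "contour A x = (if \<exists>n\<ge>1. map x [0..<n] \<notin> A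
     then of_nat (LEAST n. n \<ge> 1 \<and> map x [0..<n] \<notin> A) else \<infinity>)"

definition rotor_law :: "nat pmf \<Rightarrow> (nat list \<Rightarrow> nat) measure" where
  "rotor_law r = PiM UNIV (\<lambda>_. measure_pmf r)"

definition gfun :: "nat \<Rightarrow> nat pmf \<Rightarrow> nat \<Rightarrow> (nat \<Rightarrow> nat) \<Rightarrow> ennreal" where
  "gfun d r k x = (if k = 0 then 0
     else \<integral>\<^sup>+ rho. contour (rrange d rho (rtau d rho k)) x \<partial>(rotor_law r))"

definition pcum :: "nat pmf \<Rightarrow> nat \<Rightarrow> real" where
  "pcum r l = (\<Sum>j<l. pmf r j)"

end

theory Submission
  imports Defs
begin

text \<open>
  The walk up to \<open>\<tau>\<^sub>k\<close> consists of \<open>k\<close> excursions from the root, and \<open>R\<^sub>\<tau>\<^sub>k\<close> is the set of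
  vertices they visit. Restricted to the subtree of child \<open>i\<close>, these are excursions of a rotor walk
  on that subtree (a copy of the whole tree) with initial rotors \<open>\<rho>(i\<cdot>)\<close>. The first excursion from
  the root enters child \<open>i\<close> iff \<open>\<rho>(r) < d - i\<close>, an event of probability \<open>p\<^sub>d\<^sub>-\<^sub>i\<close>; every later one
  starts with root rotor \<open>0\<close> and enters all children. So the subtree of \<open>i\<close> carries \<open>k\<close> or \<open>k - 1\<close>
  excursions, and since \<open>f\<^sub>A(ix) = 1 + f\<^sub>A\<^sub>'(x)\<close> for the trace \<open>A'\<close> of \<open>A\<close> in that subtree, the
  recursion follows by conditioning on \<open>\<rho>(r)\<close>, which is independent of the rotors below \<open>i\<close>.

  This pathwise argument needs every excursion to be finite. The vertices explored by an
  excursion form a Galton--Watson tree in which a vertex with rotor \<open>a\<close> has \<open>d - a\<close> children;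
  the mean offspring is at most one by \<open>\<bbbE>[\<rho>] \<ge> d - 1\<close>, and \<open>r\<^sub>d > 0\<close> rules out the critical
  case without variance, so the tree is almost surely finite.
\<close>

section \<open>Excursions of the rotor walk\<close>

definition rotor_succ :: "nat \<Rightarrow> nat \<Rightarrow> nat" where "rotor_succ d a = (a + 1) mod (d + 1)"

lemma rotor_succ_le: "rotor_succ d a \<le> d" unfolding rotor_succ_def by auto

lemma rotor_succ_eq: "j \<le> d \<Longrightarrow> rotor_succ d j = (if j = d then 0 else j + 1)"
  unfolding rotor_succ_def by auto

text \<open>During the next excursion from a vertex with rotor \<open>a\<close> the rotor runs through
  \<open>rotor_succ d a, \<dots>, d\<close>, sending the walk to child \<open>d - j\<close> at value \<open>j\<close>, and then wraps to \<open>0\<close>,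
  which sends it to the parent.\<close>

definition explores :: "nat \<Rightarrow> nat \<Rightarrow> nat \<Rightarrow> bool" where
  "explores d a c \<longleftrightarrow> rotor_succ d a \<noteq> 0 \<and> rotor_succ d a \<le> d - c"

lemma explores_0: "d \<ge> 1 \<Longrightarrow> i < d \<Longrightarrow> explores d 0 i"
  unfolding explores_def rotor_succ_def by auto

definition parent :: "nat list \<Rightarrow> nat list option" where
  "parent v = (if v = [] then None else Some (butlast v))"

lemma parent_snoc: "parent (v @ [c]) = Some v"
  unfolding parent_def by simp

definition subtree :: "nat list \<Rightarrow> nat list set" where "subtree v = {w. \<exists>u. w = v @ u}"

lemma subtree_snoc_disjoint: "a \<noteq> b \<Longrightarrow> w \<in> subtree (v @ [a]) \<Longrightarrow> w \<notin> subtree (v @ [b])"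
  unfolding subtree_def by auto

lemma not_in_subtree_snoc: "v \<notin> subtree (v @ [a])"
  unfolding subtree_def by auto

lemma rotor_step_down:
  assumes "fst s = Some v" "rotor_succ d (snd s v) \<noteq> 0"
  shows "rotor_step d s = (Some (v @ [d - rotor_succ d (snd s v)]), (snd s)(v := rotor_succ d (snd s v)))"
  using assms unfolding rotor_step_def rotor_succ_def by (cases s) (auto simp: Let_def)

lemma rotor_step_up:
  assumes "fst s = Some v" "rotor_succ d (snd s v) = 0"
  shows "rotor_step d s = (parent v, (snd s)(v := 0))"
  using assms unfolding rotor_step_def rotor_succ_def parent_def by (cases s) (auto simp: Let_def)

lemma rotor_step_sink: "rotor_step d (None, \<sigma>) = (Some [], \<sigma>)"
  unfolding rotor_step_def by simp

lemma rotor_walk_add: "rotor_walk d \<rho> (a + b) = (rotor_step d ^^ b) (rotor_walk d \<rho> a)"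
  unfolding rotor_walk_def by (metis funpow_add add.commute comp_apply)

text \<open>\<open>excursion d \<sigma> v \<sigma>' V\<close>: started at \<open>v\<close> with rotors \<open>\<sigma>\<close>, the walk reaches the parent of
  \<open>v\<close> (the sink if \<open>v\<close> is the root) with rotors \<open>\<sigma>'\<close>, having visited exactly \<open>V\<close>.\<close>

inductive excursion :: "nat \<Rightarrow> (nat list \<Rightarrow> nat) \<Rightarrow> nat list \<Rightarrow> (nat list \<Rightarrow> nat) \<Rightarrow> nat list set \<Rightarrow> bool"
  for d where
  base: "rotor_succ d (\<sigma> v) = 0 \<Longrightarrow> excursion d \<sigma> v (\<sigma>(v := 0)) {v}"
| step: "j = rotor_succ d (\<sigma> v) \<Longrightarrow> j \<noteq> 0 \<Longrightarrow> excursion d (\<sigma>(v := j)) (v @ [d - j]) \<sigma>1 W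
    \<Longrightarrow> excursion d \<sigma>1 v \<sigma>2 V \<Longrightarrow> excursion d \<sigma> v \<sigma>2 (V \<union> W)"

lemma excursion_frame:
  assumes "excursion d \<sigma> v \<sigma>' V"
  shows "v \<in> V \<and> finite V \<and> (\<forall>w\<in>V. \<exists>u. w = v @ u) \<and> (\<forall>w. w \<notin> V \<longrightarrow> \<sigma>' w = \<sigma> w) \<and> \<sigma>' v = 0"
  using assms
proof (induction rule: excursion.induct)
  case (base \<sigma> v)
  then show ?case by auto
next
  case (step j \<sigma> v \<sigma>1 W \<sigma>2 V)
  then show ?case by (auto; metis append_assoc)
qed

definition visits :: "nat \<Rightarrow> rstate \<Rightarrow> nat \<Rightarrow> nat list option set" where
  "visits d s t = (\<lambda>n. fst ((rotor_step d ^^ n) s)) ` {..<t}"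

lemma visits_add:
  "visits d s (m + n) = visits d s m \<union> visits d ((rotor_step d ^^ m) s) n"
proof -
  have "{..<m + n} = {..<m} \<union> (+) m ` {..<n}"
    by (simp add: lessThan_atLeast0 ivl_disj_un_two(3) add.commute)
  moreover have "(rotor_step d ^^ (m + k)) s = (rotor_step d ^^ k) ((rotor_step d ^^ m) s)" for k
    by (simp only: add.commute[of m k] funpow_add comp_apply)
  ultimately show ?thesis
    unfolding visits_def by (simp add: image_Un image_image)
qed

lemma visits_1: "visits d s (Suc 0) = {fst s}"
  unfolding visits_def by (simp add: lessThan_Suc)

lemma rrange_visits: "rrange d \<rho> n = {v. Some v \<in> visits d (Some [], \<rho>) (Suc n)}"
  unfolding rrange_def visits_def rpos_def rotor_walk_def
  by (auto simp: image_def less_Suc_eq_le) (metis lessThan_iff less_Suc_eq_le)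

lemma rrange_0: "rrange d \<rho> 0 = {[]}"
  unfolding rrange_def rpos_def rotor_walk_def by simp

lemma rrange_Suc: "rrange d \<rho> (Suc n) = rrange d \<rho> n \<union> {v. rpos d \<rho> (Suc n) = Some v}"
  unfolding rrange_def by (auto simp: le_Suc_eq)

lemma excursion_run:
  assumes "excursion d \<sigma> v \<sigma>' V"
  shows "\<exists>t>0. (rotor_step d ^^ t) (Some v, \<sigma>) = (parent v, \<sigma>') \<and> visits d (Some v, \<sigma>) t = Some ` V"
  using assms
proof (induction rule: excursion.induct)
  case (base \<sigma> v)
  show ?case
    by (rule exI[of _ 1]) (use base in \<open>auto simp: rotor_step_up visits_1\<close>)
next
  case (step j \<sigma> v \<sigma>1 W \<sigma>2 V)
  let ?f = "rotor_step d"
  obtain t1 where t1: "(?f ^^ t1) (Some (v @ [d - j]), \<sigma>(v := j)) = (Some v, \<sigma>1)"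
    "visits d (Some (v @ [d - j]), \<sigma>(v := j)) t1 = Some ` W"
    using step.IH(1) parent_snoc by metis
  obtain t2 where t2: "(?f ^^ t2) (Some v, \<sigma>1) = (parent v, \<sigma>2)" "visits d (Some v, \<sigma>1) t2 = Some ` V"
    using step.IH(2) by metis
  have down: "?f (Some v, \<sigma>) = (Some (v @ [d - j]), \<sigma>(v := j))"
    using rotor_step_down[of "(Some v, \<sigma>)" v d] step.hyps by simp
  have run1: "(?f ^^ Suc t1) (Some v, \<sigma>) = (Some v, \<sigma>1)"
    by (simp only: funpow_Suc_right comp_apply down t1(1))
  have "(?f ^^ (Suc t1 + t2)) (Some v, \<sigma>) = (parent v, \<sigma>2)"
    by (simp only: add.commute[of "Suc t1"] funpow_add comp_apply run1 t2(1))
  moreover have "visits d (Some v, \<sigma>) (Suc t1 + t2) = visits d (Some v, \<sigma>) (Suc t1) \<union> Some ` V"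
    by (simp only: visits_add run1 t2(2))
  moreover have "visits d (Some v, \<sigma>) (Suc t1) = {Some v} \<union> Some ` W"
    using visits_add[of d "(Some v, \<sigma>)" "Suc 0" t1] by (simp add: visits_1 down t1(2))
  moreover have "v \<in> V" using excursion_frame[OF step.hyps(4)] by simp
  ultimately show ?case by (intro exI[of _ "Suc t1 + t2"]) auto
qed

lemma excursion_return:
  assumes walk: "rotor_walk d \<rho> T = (Some [], \<sigma>)" and exc: "excursion d \<sigma> [] \<sigma>' V"
    and T0: "T0 \<le> T" "\<forall>n. T0 < n \<and> n < T \<longrightarrow> rpos d \<rho> n \<noteq> None"
  shows "\<exists>t. (LEAST n. n > T0 \<and> rpos d \<rho> n = None) = T + t \<and> rotor_walk d \<rho> (T + t) = (None, \<sigma>')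
     \<and> rrange d \<rho> (T + t) = rrange d \<rho> T \<union> V"
proof -
  obtain t where t: "t > 0" "(rotor_step d ^^ t) (Some [], \<sigma>) = (None, \<sigma>')"
     "visits d (Some [], \<sigma>) t = Some ` V"
    using excursion_run[OF exc] by (auto simp: parent_def)
  have walk_t: "rotor_walk d \<rho> (T + t) = (None, \<sigma>')" by (simp add: rotor_walk_add walk t(2))
  have "rpos d \<rho> (T + s) \<in> Some ` V" if "s < t" for s
    using t(3) that unfolding rpos_def visits_def by (auto simp: rotor_walk_add walk)
  then have on_tree: "rpos d \<rho> n \<noteq> None" if "T \<le> n" "n < T + t" for n
    using that by (metis image_iff le_add_diff_inverse nat_add_left_cancel_less option.distinct(1))
  have "(LEAST n. n > T0 \<and> rpos d \<rho> n = None) = T + t"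
  proof (rule Least_equality)
    show "T0 < T + t \<and> rpos d \<rho> (T + t) = None" using T0 t(1) walk_t by (simp add: rpos_def)
    show "T + t \<le> n" if "T0 < n \<and> rpos d \<rho> n = None" for n
      using that T0(2) on_tree by (meson not_le)
  qed
  moreover have "rrange d \<rho> (T + t) = rrange d \<rho> T \<union> V"
  proof -
    have "visits d (Some [], \<rho>) (Suc (T + t)) = visits d (Some [], \<rho>) T \<union> Some ` V \<union> {None}"
      using visits_add[of d "(Some [], \<rho>)" T "t + Suc 0"] visits_add[of d "(Some [], \<sigma>)" t "Suc 0"]
      by (simp add: walk[unfolded rotor_walk_def] t(2,3) visits_1)
    moreover have "visits d (Some [], \<rho>) (Suc T) = visits d (Some [], \<rho>) T \<union> {Some []}"
      using visits_add[of d "(Some [], \<rho>)" T "Suc 0"] by (simp add: walk[unfolded rotor_walk_def] visits_1)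
    moreover have "[] \<in> V" using excursion_frame[OF exc] by simp
    ultimately show ?thesis unfolding rrange_visits by auto
  qed
  ultimately show ?thesis using walk_t by blast
qed

definition excursion_chain :: "nat \<Rightarrow> (nat list \<Rightarrow> nat) \<Rightarrow> nat \<Rightarrow> (nat \<Rightarrow> nat list \<Rightarrow> nat) \<Rightarrow> (nat \<Rightarrow> nat list set) \<Rightarrow> bool" where
  "excursion_chain d \<rho> k \<sigma>s Vs \<longleftrightarrow> \<sigma>s 0 = \<rho> \<and> (\<forall>j<k. excursion d (\<sigma>s j) [] (\<sigma>s (Suc j)) (Vs (Suc j)))"

lemma excursion_chain_range:
  assumes "excursion_chain d \<rho> k \<sigma>s Vs" "k \<ge> 1"
  shows "rotor_walk d \<rho> (rtau d \<rho> k) = (None, \<sigma>s k) \<and> rrange d \<rho> (rtau d \<rho> k) = (\<Union>j\<in>{1..k}. Vs j)"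
  using assms
proof (induction k)
  case 0 then show ?case by simp
next
  case (Suc k)
  have L: "excursion d (\<sigma>s k) [] (\<sigma>s (Suc k)) (Vs (Suc k))" using Suc.prems unfolding excursion_chain_def by auto
  have ch: "excursion_chain d \<rho> k \<sigma>s Vs" using Suc.prems unfolding excursion_chain_def by auto
  show ?case
  proof (cases "k = 0")
    case True
    have w: "rotor_walk d \<rho> 0 = (Some [], \<sigma>s k)" using Suc.prems True unfolding excursion_chain_def rotor_walk_def by simp
    obtain t where "(LEAST n. n > 0 \<and> rpos d \<rho> n = None) = 0 + t" "rotor_walk d \<rho> (0 + t) = (None, \<sigma>s (Suc k))"
      "rrange d \<rho> (0 + t) = rrange d \<rho> 0 \<union> Vs (Suc k)"
      using excursion_return[OF w L, of 0] by auto
    moreover have "[] \<in> Vs (Suc k)" using excursion_frame[OF L] by simp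
    ultimately show ?thesis using True by (auto simp: rrange_0)
  next
    case False
    then have IH: "rotor_walk d \<rho> (rtau d \<rho> k) = (None, \<sigma>s k)" "rrange d \<rho> (rtau d \<rho> k) = (\<Union>j\<in>{1..k}. Vs j)"
      using Suc.IH ch by auto
    let ?T = "Suc (rtau d \<rho> k)"
    have w: "rotor_walk d \<rho> ?T = (Some [], \<sigma>s k)"
      using rotor_walk_add[of d \<rho> "rtau d \<rho> k" 1] IH by (simp add: rotor_step_sink)
    obtain t where "(LEAST n. n > rtau d \<rho> k \<and> rpos d \<rho> n = None) = ?T + t" "rotor_walk d \<rho> (?T + t) = (None, \<sigma>s (Suc k))"
      "rrange d \<rho> (?T + t) = rrange d \<rho> ?T \<union> Vs (Suc k)"
    proof -
      have "\<forall>n. rtau d \<rho> k < n \<and> n < ?T \<longrightarrow> rpos d \<rho> n \<noteq> None" by auto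
      then show ?thesis using excursion_return[OF w L, of "rtau d \<rho> k"] that by auto
    qed
    moreover have "rrange d \<rho> ?T = rrange d \<rho> (rtau d \<rho> k) \<union> {[]}"
      using w by (simp add: rrange_Suc rpos_def)
    moreover have "[] \<in> Vs (Suc k)" using excursion_frame[OF L] by simp
    moreover have "{1..Suc k} = insert (Suc k) {1..k}" by auto
    ultimately show ?thesis using IH by auto
  qed
qed

section \<open>Excursions inside the subtree of a child\<close>

definition override_subtree :: "nat list \<Rightarrow> (nat list \<Rightarrow> nat) \<Rightarrow> (nat list \<Rightarrow> nat) \<Rightarrow> nat list \<Rightarrow> nat" where
  "override_subtree v \<sigma>' \<tau> w = (if \<exists>u. w = v @ u then \<sigma>' w else \<tau> w)"

lemma excursion_local:
  assumes "excursion d \<sigma> v \<sigma>' V" "\<forall>u. \<tau> (v @ u) = \<sigma> (v @ u)"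
  shows "excursion d \<tau> v (override_subtree v \<sigma>' \<tau>) V"
  using assms
proof (induction arbitrary: \<tau> rule: excursion.induct)
  case (base \<sigma> v)
  have tv: "\<tau> v = \<sigma> v" using base.prems[rule_format, of "[]"] by simp
  have "override_subtree v (\<sigma>(v := 0)) \<tau> = \<tau>(v := 0)"
    unfolding override_subtree_def using base.prems by (auto simp: fun_eq_iff)
  then show ?case using excursion.base[of d \<tau> v] base.hyps tv by metis
next
  case (step j \<sigma> v \<sigma>1 W \<sigma>2 V)
  have tv: "\<tau> v = \<sigma> v" using step.prems[rule_format, of "[]"] by simp
  let ?c = "v @ [d - j]"
  have "\<forall>u. (\<tau>(v := j)) (?c @ u) = (\<sigma>(v := j)) (?c @ u)" using step.prems by simp
  then have L1: "excursion d (\<tau>(v := j)) ?c (override_subtree ?c \<sigma>1 (\<tau>(v := j))) W" using step.IH(1) by blast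
  have fr1: "\<forall>w. w \<notin> W \<longrightarrow> \<sigma>1 w = (\<sigma>(v := j)) w" "\<forall>w\<in>W. \<exists>u. w = ?c @ u"
    using excursion_frame[OF step.hyps(3)] by auto
  let ?t1 = "override_subtree ?c \<sigma>1 (\<tau>(v := j))"
  have agree: "\<forall>u. ?t1 (v @ u) = \<sigma>1 (v @ u)"
  proof
    fix u
    show "?t1 (v @ u) = \<sigma>1 (v @ u)"
    proof (cases "\<exists>u'. v @ u = ?c @ u'")
      case True then show ?thesis unfolding override_subtree_def by simp
    next
      case False
      then have "v @ u \<notin> W" using fr1(2) by auto
      then have "\<sigma>1 (v @ u) = (\<sigma>(v := j)) (v @ u)" using fr1(1) by auto
      then show ?thesis using False step.prems unfolding override_subtree_def by auto
    qed
  qed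
  have L2: "excursion d ?t1 v (override_subtree v \<sigma>2 ?t1) V" using step.IH(2)[OF agree] .
  have eq: "override_subtree v \<sigma>2 ?t1 = override_subtree v \<sigma>2 \<tau>"
    unfolding override_subtree_def by (auto simp: fun_eq_iff)
  have jj: "j = rotor_succ d (\<tau> v)" using step.hyps(1) tv by simp
  show ?case using excursion.step[OF jj step.hyps(2) L1 L2] eq by simp
qed

lemma excursion_shift:
  assumes "excursion d \<sigma> x \<sigma>' V" "x = c # v"
  shows "excursion d (\<sigma> \<circ> Cons c) v (\<sigma>' \<circ> Cons c) {w. c # w \<in> V}"
  using assms
proof (induction arbitrary: v rule: excursion.induct)
  case (base \<sigma> x)
  have "(\<sigma>(x := 0)) \<circ> Cons c = (\<sigma> \<circ> Cons c)(v := 0)" using base by (auto simp: fun_eq_iff)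
  moreover have "{w. c # w \<in> {x}} = {v}" using base by auto
  ultimately show ?case using excursion.base[of d "\<sigma> \<circ> Cons c" v] base by (metis comp_apply)
next
  case (step j \<sigma> x \<sigma>1 W \<sigma>2 V)
  have e1: "(\<sigma>(x := j)) \<circ> Cons c = (\<sigma> \<circ> Cons c)(v := j)" using step by (auto simp: fun_eq_iff)
  have "x @ [d - j] = c # (v @ [d - j])" using step.prems by simp
  from step.IH(1)[OF this]
  have L1: "excursion d ((\<sigma> \<circ> Cons c)(v := j)) (v @ [d - j]) (\<sigma>1 \<circ> Cons c) {w. c # w \<in> W}"
    unfolding e1 .
  have L2: "excursion d (\<sigma>1 \<circ> Cons c) v (\<sigma>2 \<circ> Cons c) {w. c # w \<in> V}" using step.IH(2)[OF step.prems] .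
  have "{w. c # w \<in> V \<union> W} = {w. c # w \<in> V} \<union> {w. c # w \<in> W}" by auto
  moreover have jj: "j = rotor_succ d ((\<sigma> \<circ> Cons c) v)" using step.hyps(1) step.prems by simp
  ultimately show ?case using excursion.step[OF jj step.hyps(2) L1 L2] by metis
qed

lemma excursion_child:
  assumes "excursion d \<sigma> v \<sigma>' V" "i < d"
  shows "(explores d (\<sigma> v) i \<longrightarrow> (\<exists>\<tau>' W. excursion d \<sigma> (v @ [i]) \<tau>' W \<and> V \<inter> subtree (v @ [i]) = W
             \<and> (\<forall>w\<in>subtree (v @ [i]). \<sigma>' w = \<tau>' w))) \<and>
         (\<not> explores d (\<sigma> v) i \<longrightarrow> V \<inter> subtree (v @ [i]) = {} \<and> (\<forall>w\<in>subtree (v @ [i]). \<sigma>' w = \<sigma> w))"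
  using assms
proof (induction rule: excursion.induct)
  case (base \<sigma> v)
  then show ?case using not_in_subtree_snoc[of v i] by (auto simp: explores_def)
next
  case (step j \<sigma> v \<sigma>1 W \<sigma>2 V)
  let ?c = "d - j"
  have fr1: "\<forall>w. w \<notin> W \<longrightarrow> \<sigma>1 w = (\<sigma>(v := j)) w" "W \<subseteq> subtree (v @ [?c])"
    using excursion_frame[OF step.hyps(3)] unfolding subtree_def by auto
  have fr2: "V \<subseteq> subtree v" using excursion_frame[OF step.hyps(4)] unfolding subtree_def by auto
  have jd: "j \<le> d" "0 < j" using rotor_succ_le step.hyps(1,2) by auto
  have s1v: "\<sigma>1 v = j" using fr1 not_in_subtree_snoc[of v ?c] by auto
  have s1eq: "\<forall>w\<in>subtree (v @ [i]). \<sigma>1 w = \<sigma> w" if "i \<noteq> ?c"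
    using fr1 subtree_snoc_disjoint[OF that] not_in_subtree_snoc[of v i] by (metis fun_upd_apply subsetD)
  note IH2 = step.IH(2)[OF step.prems]
  consider "i = ?c" | "i < ?c" | "i > ?c" by linarith
  then show ?case
  proof cases
    case 1
    have ex: "explores d (\<sigma> v) i" using 1 jd step.hyps(1) by (auto simp: explores_def)
    have nex: "\<not> explores d (\<sigma>1 v) i" using 1 s1v jd by (auto simp: explores_def rotor_succ_eq)
    have agree: "\<forall>u. \<sigma> ((v @ [?c]) @ u) = (\<sigma>(v := j)) ((v @ [?c]) @ u)" by simp
    have L: "excursion d \<sigma> (v @ [i]) (override_subtree (v @ [?c]) \<sigma>1 \<sigma>) W" using excursion_local[OF step.hyps(3) agree] 1 by simp
    have "(V \<union> W) \<inter> subtree (v @ [i]) = W" using IH2 nex fr1(2) 1 by auto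
    moreover have "\<forall>w\<in>subtree (v @ [i]). \<sigma>2 w = override_subtree (v @ [?c]) \<sigma>1 \<sigma> w"
      using IH2 nex 1 unfolding override_subtree_def subtree_def by auto
    ultimately show ?thesis using ex L by blast
  next
    case 2
    have ex: "explores d (\<sigma> v) i" using 2 jd step.hyps(1) by (auto simp: explores_def)
    have ex1: "explores d (\<sigma>1 v) i" using 2 s1v jd by (auto simp: explores_def rotor_succ_eq)
    obtain \<tau>' W' where T: "excursion d \<sigma>1 (v @ [i]) \<tau>' W'" "V \<inter> subtree (v @ [i]) = W'" "\<forall>w\<in>subtree (v @ [i]). \<sigma>2 w = \<tau>' w"
      using IH2 ex1 by blast
    have agree: "\<forall>u. \<sigma> ((v @ [i]) @ u) = \<sigma>1 ((v @ [i]) @ u)" using s1eq 2 unfolding subtree_def by auto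
    have L: "excursion d \<sigma> (v @ [i]) (override_subtree (v @ [i]) \<tau>' \<sigma>) W'" using excursion_local[OF T(1) agree] .
    have "W \<inter> subtree (v @ [i]) = {}" using fr1(2) subtree_snoc_disjoint[of ?c i] 2 by auto
    then have "(V \<union> W) \<inter> subtree (v @ [i]) = W'" using T(2) by auto
    moreover have "\<forall>w\<in>subtree (v @ [i]). \<sigma>2 w = override_subtree (v @ [i]) \<tau>' \<sigma> w"
      using T(3) unfolding override_subtree_def subtree_def by auto
    ultimately show ?thesis using ex L by blast
  next
    case 3
    have nex: "\<not> explores d (\<sigma> v) i" using 3 jd step.hyps(1) by (auto simp: explores_def)
    have nex1: "\<not> explores d (\<sigma>1 v) i" using 3 s1v jd by (auto simp: explores_def rotor_succ_eq)
    have "W \<inter> subtree (v @ [i]) = {}" using fr1(2) subtree_snoc_disjoint[of ?c i] 3 by auto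
    then show ?thesis using IH2 nex nex1 s1eq 3 by auto
  qed
qed

text \<open>The number of the first \<open>k\<close> excursions from the root that enter the subtree of child
  \<open>i\<close>: every excursion after the first starts with root rotor \<open>0\<close> and hence visits all children.\<close>

definition child_visits :: "nat \<Rightarrow> (nat list \<Rightarrow> nat) \<Rightarrow> nat \<Rightarrow> nat \<Rightarrow> nat" where
  "child_visits d \<rho> i k = (if k = 0 then 0 else if explores d (\<rho> []) i then k else k - 1)"

lemma child_visits_Suc:
  assumes "excursion_chain d \<rho> (Suc k) \<sigma>s Vs" "i < d"
  shows "child_visits d \<rho> i (Suc k) =
    (if explores d (\<sigma>s k []) i then Suc (child_visits d \<rho> i k) else child_visits d \<rho> i k)"
proof (cases k)
  case 0
  then show ?thesis using assms(1) unfolding child_visits_def excursion_chain_def by auto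
next
  case (Suc k')
  then have "excursion d (\<sigma>s k') [] (\<sigma>s k) (Vs k)" using assms(1) unfolding excursion_chain_def by auto
  then have "\<sigma>s k [] = 0" using excursion_frame by blast
  then show ?thesis using Suc explores_0[of d i] assms(2) unfolding child_visits_def by auto
qed

lemma excursion_chain_child:
  assumes "excursion_chain d \<rho> k \<sigma>s Vs" "i < d"
  shows "\<exists>\<sigma>s' Vs'. excursion_chain d (\<rho> \<circ> Cons i) (child_visits d \<rho> i k) \<sigma>s' Vs'
     \<and> \<sigma>s' (child_visits d \<rho> i k) = \<sigma>s k \<circ> Cons i
     \<and> (\<Union>j\<in>{1..k}. Vs j) \<inter> subtree [i] = Cons i ` (\<Union>j\<in>{1..child_visits d \<rho> i k}. Vs' j)"
  using assms
proof (induction k)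
  case 0
  then show ?case
    by (intro exI[of _ "\<lambda>_. \<rho> \<circ> Cons i"] exI[of _ "\<lambda>_. {}"]) (auto simp: excursion_chain_def child_visits_def)
next
  case (Suc k)
  let ?m = "child_visits d \<rho> i k"
  have L: "excursion d (\<sigma>s k) [] (\<sigma>s (Suc k)) (Vs (Suc k))"
    using Suc.prems unfolding excursion_chain_def by auto
  have "excursion_chain d \<rho> k \<sigma>s Vs" using Suc.prems unfolding excursion_chain_def by auto
  then obtain \<sigma>s' Vs' where IH: "excursion_chain d (\<rho> \<circ> Cons i) ?m \<sigma>s' Vs'"
    "\<sigma>s' ?m = \<sigma>s k \<circ> Cons i" "(\<Union>j\<in>{1..k}. Vs j) \<inter> subtree [i] = Cons i ` (\<Union>j\<in>{1..?m}. Vs' j)"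
    using Suc.IH Suc.prems(2) by blast
  have U: "(\<Union>j\<in>{1..Suc k}. Vs j) = (\<Union>j\<in>{1..k}. Vs j) \<union> Vs (Suc k)"
    by (subst atLeastAtMostSuc_conv) auto
  note child = excursion_child[OF L Suc.prems(2), simplified]
  note visits = child_visits_Suc[OF Suc.prems]
  show ?case
  proof (cases "explores d (\<sigma>s k []) i")
    case True
    obtain \<tau>' W where T: "excursion d (\<sigma>s k) [i] \<tau>' W" "Vs (Suc k) \<inter> subtree [i] = W"
      "\<forall>w\<in>subtree [i]. \<sigma>s (Suc k) w = \<tau>' w" using child True by blast
    have S: "excursion d (\<sigma>s k \<circ> Cons i) [] (\<tau>' \<circ> Cons i) {w. i # w \<in> W}"
      using excursion_shift[OF T(1)] by simp
    define \<sigma>s2 where "\<sigma>s2 = \<sigma>s'(Suc ?m := \<tau>' \<circ> Cons i)"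
    define Vs2 where "Vs2 = Vs'(Suc ?m := {w. i # w \<in> W})"
    have "excursion_chain d (\<rho> \<circ> Cons i) (Suc ?m) \<sigma>s2 Vs2"
      using IH(1) S IH(2) unfolding excursion_chain_def \<sigma>s2_def Vs2_def by (auto simp: less_Suc_eq)
    moreover have "\<sigma>s2 (Suc ?m) = \<sigma>s (Suc k) \<circ> Cons i"
      using T(3) unfolding \<sigma>s2_def by (auto simp: fun_eq_iff subtree_def)
    moreover have "(\<Union>j\<in>{1..Suc k}. Vs j) \<inter> subtree [i] = Cons i ` (\<Union>j\<in>{1..Suc ?m}. Vs2 j)"
    proof -
      have "(\<Union>j\<in>{1..Suc ?m}. Vs2 j) = (\<Union>j\<in>{1..?m}. Vs' j) \<union> {w. i # w \<in> W}"
        unfolding Vs2_def by (subst atLeastAtMostSuc_conv) auto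
      moreover have "W = Cons i ` {w. i # w \<in> W}"
        using T(2) unfolding subtree_def by auto
      ultimately show ?thesis unfolding U Int_Un_distrib2 IH(3) T(2) by (metis image_Un)
    qed
    moreover have "child_visits d \<rho> i (Suc k) = Suc ?m" using visits True by simp
    ultimately show ?thesis by metis
  next
    case False
    have T: "Vs (Suc k) \<inter> subtree [i] = {}" "\<forall>w\<in>subtree [i]. \<sigma>s (Suc k) w = \<sigma>s k w"
      using child False by blast+
    have "\<sigma>s' ?m = \<sigma>s (Suc k) \<circ> Cons i" using IH(2) T(2) by (auto simp: fun_eq_iff subtree_def)
    moreover have "(\<Union>j\<in>{1..Suc k}. Vs j) \<inter> subtree [i] = Cons i ` (\<Union>j\<in>{1..?m}. Vs' j)"
      unfolding U Int_Un_distrib2 IH(3) T(1) by simp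
    moreover have "child_visits d \<rho> i (Suc k) = ?m" using visits False by simp
    ultimately show ?thesis using IH(1) by metis
  qed
qed

lemma map_case_nat: "map (case_nat i x) [0..<Suc n] = i # map x [0..<n]"
  by (simp only: upt_conv_Cons[of 0 "Suc n"] zero_less_Suc list.map nat.case map_Suc_upt[symmetric] map_map o_def)

lemma contour_case_nat:
  assumes "A \<inter> subtree [i] = Cons i ` B"
  shows "contour A (case_nat i x) = (if [] \<in> B then 1 + contour B x else 1)"
proof -
  have mem: "i # l \<in> A \<longleftrightarrow> l \<in> B" for l
  proof -
    have "i # l \<in> subtree [i]" unfolding subtree_def by simp
    then have "i # l \<in> A \<longleftrightarrow> i # l \<in> Cons i ` B" using assms by blast
    also have "\<dots> \<longleftrightarrow> l \<in> B" by auto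
    finally show ?thesis .
  qed
  define P where "P = (\<lambda>n. n \<ge> 1 \<and> map (case_nat i x) [0..<n] \<notin> A)"
  define Q where "Q = (\<lambda>n. n \<ge> 1 \<and> map x [0..<n] \<notin> B)"
  have cA: "contour A (case_nat i x) = (if \<exists>n. P n then of_nat (LEAST n. P n) else \<infinity>)"
    unfolding contour_def P_def by (simp only: ex_simps)
  have cB: "contour B x = (if \<exists>n. Q n then of_nat (LEAST n. Q n) else \<infinity>)"
    unfolding contour_def Q_def by (simp only: ex_simps)
  have PS: "P (Suc n) \<longleftrightarrow> map x [0..<n] \<notin> B" for n
    unfolding P_def by (simp only: map_case_nat mem) simp
  have P0: "\<not> P 0" unfolding P_def by simp
  show ?thesis
  proof (cases "[] \<in> B")
    case False
    then have P1: "P 1" using PS[of 0] by simp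
    then have "(LEAST n. P n) = 1" using P0 by (intro Least_equality) (simp_all add: P_def)
    then show ?thesis using False P1 cA by (simp; blast)
  next
    case True
    have PQ': "P (Suc n) \<longleftrightarrow> Q n" for n
      using PS[of n] True unfolding Q_def by (cases n) simp_all
    have ex: "(\<exists>n. P n) \<longleftrightarrow> (\<exists>n. Q n)"
      by (metis P0 PQ' not0_implies_Suc)
    show ?thesis
    proof (cases "\<exists>n. Q n")
      case True2: True
      then obtain n where "P n" using ex by blast
      then have "(LEAST n. P n) = Suc (LEAST m. P (Suc m))" by (rule Least_Suc) (use P0 in blast)
      also have "(LEAST m. P (Suc m)) = (LEAST m. Q m)" using PQ' by simp
      finally have "(LEAST n. P n) = Suc (LEAST m. Q m)" .
      then have "contour A (case_nat i x) = of_nat (Suc (LEAST m. Q m))" using cA True2 ex by simp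
      also have "\<dots> = 1 + contour B x" using cB True2 by (simp add: add.commute)
      finally show ?thesis using True by simp
    next
      case False
      then show ?thesis using True ex cA cB by simp
    qed
  qed
qed

section \<open>Finite explorations\<close>

text \<open>The tree of vertices below \<open>v\<close> that an excursion from \<open>v\<close> would explore under the
  rotors \<open>\<sigma>\<close> is well-founded, respectively of height less than \<open>n\<close>.\<close>

inductive finite_exploration :: "nat \<Rightarrow> (nat list \<Rightarrow> nat) \<Rightarrow> nat list \<Rightarrow> bool" for d where
  finite_explorationI: "(\<forall>c<d. explores d (\<sigma> v) c \<longrightarrow> finite_exploration d \<sigma> (v @ [c])) \<Longrightarrow> finite_exploration d \<sigma> v"

fun exploration_within :: "nat \<Rightarrow> nat \<Rightarrow> (nat list \<Rightarrow> nat) \<Rightarrow> nat list \<Rightarrow> bool" where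
  "exploration_within d 0 \<sigma> v = False"
| "exploration_within d (Suc n) \<sigma> v = (\<forall>c<d. explores d (\<sigma> v) c \<longrightarrow> exploration_within d n \<sigma> (v @ [c]))"

lemma exploration_within_finite: "exploration_within d n \<sigma> v \<Longrightarrow> finite_exploration d \<sigma> v"
proof (induction n arbitrary: v)
  case 0 then show ?case by simp
next
  case (Suc n)
  show ?case
  proof (rule finite_explorationI, intro allI impI)
    fix c assume "c < d" "explores d (\<sigma> v) c"
    then show "finite_exploration d \<sigma> (v @ [c])" using Suc by simp
  qed
qed

lemma exploration_within_Suc: "exploration_within d n \<sigma> v \<Longrightarrow> exploration_within d (Suc n) \<sigma> v"
proof (induction n arbitrary: v)
  case 0 then show ?case by simp
next
  case (Suc n)
  have "\<forall>c<d. explores d (\<sigma> v) c \<longrightarrow> exploration_within d n \<sigma> (v @ [c])" using Suc.prems by simp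
  then have "\<forall>c<d. explores d (\<sigma> v) c \<longrightarrow> exploration_within d (Suc n) \<sigma> (v @ [c])" using Suc.IH by blast
  then show ?case by (simp only: exploration_within.simps(2))
qed

lemma exploration_within_append: "exploration_within d n \<sigma> (w @ v) \<longleftrightarrow> exploration_within d n (\<sigma> \<circ> (@) w) v"
  by (induction n arbitrary: v) auto

lemma exploration_within_Suc_root: "exploration_within d (Suc n) \<sigma> [] \<longleftrightarrow> (\<forall>c<d. explores d (\<sigma> []) c \<longrightarrow> exploration_within d n (\<sigma> \<circ> Cons c) [])"
  using exploration_within_append[of d n \<sigma> "[c]" "[]" for c] by (simp add: comp_def)

lemma finite_exploration_local: "finite_exploration d \<sigma> v \<Longrightarrow> (\<forall>u. \<tau> (v @ u) = \<sigma> (v @ u)) \<Longrightarrow> finite_exploration d \<tau> v"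
proof (induction rule: finite_exploration.induct)
  case (finite_explorationI \<sigma> v)
  have tv: "\<tau> v = \<sigma> v" using finite_explorationI.prems[rule_format, of "[]"] by simp
  show ?case
  proof (rule finite_exploration.finite_explorationI, intro allI impI)
    fix c assume c: "c < d" "explores d (\<tau> v) c"
    have "\<forall>u. \<tau> ((v @ [c]) @ u) = \<sigma> ((v @ [c]) @ u)" using finite_explorationI.prems by simp
    then show "finite_exploration d \<tau> (v @ [c])" using finite_explorationI.IH c tv by simp
  qed
qed

lemma finite_exploration_append1: "finite_exploration d \<sigma> x \<Longrightarrow> x = w @ v \<Longrightarrow> finite_exploration d (\<sigma> \<circ> (@) w) v"
proof (induction arbitrary: v rule: finite_exploration.induct)
  case (finite_explorationI \<sigma> x)
  show ?case
  proof (rule finite_exploration.finite_explorationI, intro allI impI)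
    fix c assume c: "c < d" "explores d ((\<sigma> \<circ> (@) w) v) c"
    have "x @ [c] = w @ (v @ [c])" using finite_explorationI.prems by simp
    then show "finite_exploration d (\<sigma> \<circ> (@) w) (v @ [c])" using finite_explorationI.IH c finite_explorationI.prems by (simp add: comp_def)
  qed
qed

lemma finite_exploration_append2: "finite_exploration d \<tau> v \<Longrightarrow> \<tau> = \<sigma> \<circ> (@) w \<Longrightarrow> finite_exploration d \<sigma> (w @ v)"
proof (induction rule: finite_exploration.induct)
  case (finite_explorationI \<tau> v)
  show ?case
  proof (rule finite_exploration.finite_explorationI, intro allI impI)
    fix c assume c: "c < d" "explores d (\<sigma> (w @ v)) c"
    then show "finite_exploration d \<sigma> ((w @ v) @ [c])" using finite_explorationI.IH finite_explorationI.prems by simp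
  qed
qed

lemma finite_exploration_append: "finite_exploration d \<sigma> (w @ v) \<longleftrightarrow> finite_exploration d (\<sigma> \<circ> (@) w) v"
  using finite_exploration_append1 finite_exploration_append2 by metis

definition children_left :: "nat \<Rightarrow> nat \<Rightarrow> nat" where "children_left d a = (if rotor_succ d a = 0 then 0 else Suc d - rotor_succ d a)"

text \<open>Induction on the number of children still to be visited from \<open>v\<close>; the rotors below a
  child not yet visited are untouched, so its excursion exists by hypothesis.\<close>

lemma excursion_exists_from_children:
  assumes H: "\<forall>c<d. explores d a0 c \<longrightarrow> (\<forall>\<tau>. (\<forall>u. \<tau> (v @ [c] @ u) = \<sigma>0 (v @ [c] @ u)) \<longrightarrow> (\<exists>\<tau>' W. excursion d \<tau> (v @ [c]) \<tau>' W))"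
  shows "(\<forall>c<d. explores d (\<sigma> v) c \<longrightarrow> explores d a0 c \<and> (\<forall>u. \<sigma> (v @ [c] @ u) = \<sigma>0 (v @ [c] @ u)))
     \<Longrightarrow> \<exists>\<sigma>' V. excursion d \<sigma> v \<sigma>' V"
proof (induction "children_left d (\<sigma> v)" arbitrary: \<sigma> rule: less_induct)
  case less
  show ?case
  proof (cases "rotor_succ d (\<sigma> v) = 0")
    case True then show ?thesis using excursion.base by blast
  next
    case False
    define j where "j = rotor_succ d (\<sigma> v)"
    have jd: "0 < j" "j \<le> d" using False rotor_succ_le unfolding j_def by auto
    define c where "c = d - j"
    have cd: "c < d" using jd unfolding c_def by auto
    have exc: "explores d (\<sigma> v) c" using jd unfolding explores_def c_def j_def by auto
    obtain \<sigma>1 W where L1: "excursion d (\<sigma>(v := j)) (v @ [c]) \<sigma>1 W"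
    proof -
      have "\<forall>u. (\<sigma>(v := j)) (v @ [c] @ u) = \<sigma>0 (v @ [c] @ u)" using less.prems cd exc by simp
      then show ?thesis using H less.prems cd exc that by blast
    qed
    have fr: "\<forall>w. w \<notin> W \<longrightarrow> \<sigma>1 w = (\<sigma>(v := j)) w" "W \<subseteq> subtree (v @ [c])"
      using excursion_frame[OF L1] unfolding subtree_def by auto
    have s1v: "\<sigma>1 v = j" using fr not_in_subtree_snoc[of v c] by auto
    have prem: "\<forall>c'<d. explores d (\<sigma>1 v) c' \<longrightarrow> explores d a0 c' \<and> (\<forall>u. \<sigma>1 (v @ [c'] @ u) = \<sigma>0 (v @ [c'] @ u))"
    proof (intro allI impI)
      fix c' assume c': "c' < d" "explores d (\<sigma>1 v) c'"
      then have jl: "j < d" "j + 1 \<le> d - c'" using s1v jd unfolding explores_def by (auto simp: rotor_succ_eq split: if_splits)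
      then have "explores d (\<sigma> v) c'" using jd unfolding explores_def j_def by auto
      then have A: "explores d a0 c' \<and> (\<forall>u. \<sigma> (v @ [c'] @ u) = \<sigma>0 (v @ [c'] @ u))" using less.prems c' by blast
      have "c' \<noteq> c" using jl unfolding c_def by auto
      have "\<sigma>1 (v @ [c'] @ u) = \<sigma> (v @ [c'] @ u)" for u
      proof -
        have "v @ [c'] @ u \<in> subtree (v @ [c'])" unfolding subtree_def by simp
        then have "v @ [c'] @ u \<notin> W" using fr(2) subtree_snoc_disjoint[OF \<open>c' \<noteq> c\<close>] by blast
        then have "\<sigma>1 (v @ [c'] @ u) = (\<sigma>(v := j)) (v @ [c'] @ u)" using fr(1) by blast
        then show ?thesis by simp
      qed
      then show "explores d a0 c' \<and> (\<forall>u. \<sigma>1 (v @ [c'] @ u) = \<sigma>0 (v @ [c'] @ u))" using A by simp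
    qed
    have "children_left d (\<sigma>1 v) < children_left d (\<sigma> v)"
      using s1v jd unfolding children_left_def j_def[symmetric] by (auto simp: rotor_succ_eq)
    then obtain \<sigma>2 V where L2: "excursion d \<sigma>1 v \<sigma>2 V" using less.hyps prem by blast
    show ?thesis using excursion.step[OF j_def False[folded j_def] L1[unfolded c_def] L2] by blast
  qed
qed

lemma finite_exploration_excursion: "finite_exploration d \<sigma> v \<Longrightarrow> \<forall>\<tau>. (\<forall>u. \<tau> (v @ u) = \<sigma> (v @ u)) \<longrightarrow> (\<exists>\<tau>' V. excursion d \<tau> v \<tau>' V)"
proof (induction rule: finite_exploration.induct)
  case (finite_explorationI \<sigma> v)
  show ?case
  proof (intro allI impI)
    fix \<tau> assume agree: "\<forall>u. \<tau> (v @ u) = \<sigma> (v @ u)"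
    have H: "\<forall>c<d. explores d (\<sigma> v) c \<longrightarrow> (\<forall>\<tau>. (\<forall>u. \<tau> (v @ [c] @ u) = \<sigma> (v @ [c] @ u)) \<longrightarrow> (\<exists>\<tau>' W. excursion d \<tau> (v @ [c]) \<tau>' W))"
      using finite_explorationI.IH by simp
    have tv: "\<tau> v = \<sigma> v" using agree[rule_format, of "[]"] by simp
    show "\<exists>\<tau>' V. excursion d \<tau> v \<tau>' V"
      by (rule excursion_exists_from_children[OF H]) (use agree tv in \<open>simp\<close>)
  qed
qed

lemma finite_exploration_perturb:
  assumes "\<forall>w. finite_exploration d \<rho> w" "\<forall>w. length w \<ge> N \<longrightarrow> \<sigma> w = \<rho> w"
  shows "finite_exploration d \<sigma> v"
proof (induction "N - length v" arbitrary: v rule: less_induct)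
  case less
  show ?case
  proof (cases "length v \<ge> N")
    case True
    then show ?thesis using finite_exploration_local[OF assms(1)[rule_format, of v], of \<sigma>] assms(2) by simp
  next
    case False
    show ?thesis
    proof (rule finite_explorationI, intro allI impI)
      fix c assume "c < d" "explores d (\<sigma> v) c"
      have "N - length (v @ [c]) < N - length v" using False by simp
      then show "finite_exploration d \<sigma> (v @ [c])" by (rule less.hyps)
    qed
  qed
qed

lemma excursion_chain_exists:
  assumes "\<forall>w. finite_exploration d \<rho> w"
  shows "\<exists>\<sigma>s Vs. excursion_chain d \<rho> k \<sigma>s Vs \<and> (\<exists>N. \<forall>w. length w \<ge> N \<longrightarrow> \<sigma>s k w = \<rho> w)"
proof (induction k)
  case 0
  show ?case by (rule exI[of _ "\<lambda>_. \<rho>"], rule exI[of _ "\<lambda>_. {}"]) (auto simp: excursion_chain_def)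
next
  case (Suc k)
  then obtain \<sigma>s Vs N where ch: "excursion_chain d \<rho> k \<sigma>s Vs" "\<forall>w. length w \<ge> N \<longrightarrow> \<sigma>s k w = \<rho> w" by blast
  have "finite_exploration d (\<sigma>s k) []" using finite_exploration_perturb[OF assms ch(2)] .
  then obtain \<sigma>' V where L: "excursion d (\<sigma>s k) [] \<sigma>' V" using finite_exploration_excursion by blast
  have fr: "finite V" "\<forall>w. w \<notin> V \<longrightarrow> \<sigma>' w = \<sigma>s k w" using excursion_frame[OF L] by auto
  define N' where "N' = max N (Suc (Max (length ` V)))"
  have "\<forall>w. length w \<ge> N' \<longrightarrow> \<sigma>' w = \<rho> w"
  proof (intro allI impI)
    fix w :: "nat list" assume "N' \<le> length w"
    have "w \<notin> V"
    proof
      assume "w \<in> V"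
      then have "length w \<le> Max (length ` V)" using fr(1) by simp
      then show False using \<open>N' \<le> length w\<close> unfolding N'_def by simp
    qed
    moreover have "length w \<ge> N" using \<open>N' \<le> length w\<close> unfolding N'_def by simp
    ultimately show "\<sigma>' w = \<rho> w" using fr(2) ch(2) by simp
  qed
  moreover have "excursion_chain d \<rho> (Suc k) (\<sigma>s(Suc k := \<sigma>')) (Vs(Suc k := V))"
    using ch(1) L unfolding excursion_chain_def by (auto simp: less_Suc_eq)
  ultimately show ?case by (metis fun_upd_same)
qed

definition return_contour :: "nat \<Rightarrow> nat \<Rightarrow> (nat list \<Rightarrow> nat) \<Rightarrow> (nat \<Rightarrow> nat) \<Rightarrow> ennreal" where
  "return_contour d k \<sigma> x = (if k = 0 then 0 else contour (rrange d \<sigma> (rtau d \<sigma> k)) x)"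

lemma return_contour_case_nat:
  assumes "\<forall>w. finite_exploration d \<rho> w" "k \<ge> 1" "i < d"
  shows "contour (rrange d \<rho> (rtau d \<rho> k)) (case_nat i x) =
    1 + (if explores d (\<rho> []) i then return_contour d k (\<rho> \<circ> Cons i) x else return_contour d (k - 1) (\<rho> \<circ> Cons i) x)"
proof -
  obtain \<sigma>s Vs where ch: "excursion_chain d \<rho> k \<sigma>s Vs" using excursion_chain_exists[OF assms(1)] by blast
  have R: "rrange d \<rho> (rtau d \<rho> k) = (\<Union>j\<in>{1..k}. Vs j)" using excursion_chain_range[OF ch assms(2)] by simp
  let ?m = "child_visits d \<rho> i k"
  obtain \<sigma>s' Vs' where ch': "excursion_chain d (\<rho> \<circ> Cons i) ?m \<sigma>s' Vs'"
    and S: "(\<Union>j\<in>{1..k}. Vs j) \<inter> subtree [i] = Cons i ` (\<Union>j\<in>{1..?m}. Vs' j)"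
    using excursion_chain_child[OF ch assms(3)] by blast
  have m: "?m = (if explores d (\<rho> []) i then k else k - 1)" using assms(2) unfolding child_visits_def by simp
  have C: "contour (rrange d \<rho> (rtau d \<rho> k)) (case_nat i x) =
     (if [] \<in> (\<Union>j\<in>{1..?m}. Vs' j) then 1 + contour (\<Union>j\<in>{1..?m}. Vs' j) x else 1)"
    unfolding R by (rule contour_case_nat[OF S])
  show ?thesis
  proof (cases "?m = 0")
    case True
    then have "(\<Union>j\<in>{1..?m}. Vs' j) = {}" by simp
    moreover have "\<not> explores d (\<rho> []) i" "k = 1" using True m assms(2) by (auto split: if_splits)
    ultimately show ?thesis using C by (simp add: return_contour_def)
  next
    case False
    have L1: "excursion d (\<sigma>s' 0) [] (\<sigma>s' 1) (Vs' 1)" using ch' False unfolding excursion_chain_def by (metis One_nat_def neq0_conv)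
    have "[] \<in> Vs' 1" using excursion_frame[OF L1] by simp
    then have in1: "[] \<in> (\<Union>j\<in>{1..?m}. Vs' j)" using False by (intro UN_I[of 1]) auto
    have R': "rrange d (\<rho> \<circ> Cons i) (rtau d (\<rho> \<circ> Cons i) ?m) = (\<Union>j\<in>{1..?m}. Vs' j)"
      using excursion_chain_range[OF ch'] False by simp
    have "return_contour d ?m (\<rho> \<circ> Cons i) x = contour (\<Union>j\<in>{1..?m}. Vs' j) x"
      unfolding return_contour_def R' using False by simp
    then show ?thesis using C in1 m by (simp split: if_splits)
  qed
qed

section \<open>Measurability\<close>

abbreviation rotor_space :: "(nat list \<Rightarrow> nat) measure" where
  "rotor_space \<equiv> PiM UNIV (\<lambda>_. count_space UNIV)"

definition words_le :: "nat \<Rightarrow> nat \<Rightarrow> nat list set" where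
  "words_le d n = {w. set w \<subseteq> {..<d} \<and> length w \<le> n}"

lemma finite_words_le: "finite (words_le d n)"
  unfolding words_le_def using finite_lists_length_le[of "{..<d}" n] by simp

lemma rotor_walk_local:
  assumes "\<forall>w\<in>words_le d n. \<rho> w = \<rho>' w" "t \<le> n"
  shows "fst (rotor_walk d \<rho> t) = fst (rotor_walk d \<rho>' t) \<and>
    (\<forall>v. fst (rotor_walk d \<rho> t) = Some v \<longrightarrow> v \<in> words_le d t) \<and>
    (\<forall>w\<in>words_le d n. snd (rotor_walk d \<rho> t) w = snd (rotor_walk d \<rho>' t) w)"
  using assms(2)
proof (induction t)
  case 0
  then show ?case using assms(1) unfolding rotor_walk_def words_le_def by simp
next
  case (Suc t)
  obtain p \<sigma> where s: "rotor_walk d \<rho> t = (p, \<sigma>)" by (cases "rotor_walk d \<rho> t") auto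
  obtain p' \<sigma>' where s': "rotor_walk d \<rho>' t = (p', \<sigma>')" by (cases "rotor_walk d \<rho>' t") auto
  have IH: "p = p'" "\<forall>v. p = Some v \<longrightarrow> v \<in> words_le d t" "\<forall>w\<in>words_le d n. \<sigma> w = \<sigma>' w"
    using Suc s s' by auto
  have step: "rotor_walk d \<rho> (Suc t) = rotor_step d (p, \<sigma>)" "rotor_walk d \<rho>' (Suc t) = rotor_step d (p', \<sigma>')"
    using s s' unfolding rotor_walk_def by simp_all
  have WW: "words_le d t \<subseteq> words_le d n" using Suc.prems unfolding words_le_def by auto
  show ?case
  proof (cases p)
    case None
    then show ?thesis using step IH unfolding rotor_step_def words_le_def by simp
  next
    case (Some v)
    have vW: "v \<in> words_le d t" using IH Some by simp
    then have eqv: "\<sigma> v = \<sigma>' v" using IH WW by auto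
    define j where "j = (\<sigma> v + 1) mod (d + 1)"
    have R: "rotor_step d (Some v, \<sigma>) = ((if j = 0 then (if v = [] then None else Some (butlast v))
             else Some (v @ [d - j])), \<sigma>(v := j))"
      unfolding rotor_step_def j_def by (simp add: Let_def)
    have R': "rotor_step d (Some v, \<sigma>') = ((if j = 0 then (if v = [] then None else Some (butlast v))
             else Some (v @ [d - j])), \<sigma>'(v := j))"
      unfolding rotor_step_def j_def eqv by (simp add: Let_def)
    have "set (butlast v) \<subseteq> {..<d}" using vW unfolding words_le_def by (auto dest: in_set_butlastD)
    moreover have "j \<noteq> 0 \<Longrightarrow> d - j < d" unfolding j_def by (cases d) auto
    ultimately have pos: "\<forall>v'. fst (rotor_step d (Some v, \<sigma>)) = Some v' \<longrightarrow> v' \<in> words_le d (Suc t)"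
      using vW unfolding R words_le_def by (auto split: if_splits simp: length_butlast)
    have "fst (rotor_step d (Some v, \<sigma>)) = fst (rotor_step d (Some v, \<sigma>'))" unfolding R R' by simp
    moreover have "\<forall>w\<in>words_le d n. snd (rotor_step d (Some v, \<sigma>)) w = snd (rotor_step d (Some v, \<sigma>')) w"
      unfolding R R' using IH(3) by simp
    ultimately show ?thesis using pos step Some IH(1) by simp
  qed
qed

lemma measurable_map_eq: "Measurable.pred rotor_space (\<lambda>\<rho>. map \<rho> l = ys)"
proof (induction l arbitrary: ys)
  case Nil then show ?case by simp
next
  case (Cons a l)
  have "(\<lambda>\<rho>. map \<rho> (a # l) = ys) = (\<lambda>\<rho>. ys \<noteq> [] \<and> \<rho> a = hd ys \<and> map \<rho> l = tl ys)"
    by (cases ys) auto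
  then show ?case using Cons by simp
qed

lemma measurable_map: "(\<lambda>\<rho>. map \<rho> l) \<in> measurable rotor_space (count_space UNIV)"
  unfolding measurable_count_space_eq2_countable
proof (intro conjI ballI)
  fix ys :: "nat list"
  have "(\<lambda>\<rho>. map \<rho> l) -` {ys} \<inter> space rotor_space = {\<rho> \<in> space rotor_space. map \<rho> l = ys}" by auto
  then show "(\<lambda>\<rho>. map \<rho> l) -` {ys} \<inter> space rotor_space \<in> sets rotor_space" using measurable_map_eq[of l ys] by simp
qed simp

lemma measurable_count_space_comp: "g \<in> measurable M (count_space UNIV) \<Longrightarrow> (\<lambda>x. F (g x)) \<in> measurable M (count_space UNIV)"
  by (rule measurable_compose[of g M "count_space UNIV" F "count_space UNIV"]) simp_all

text \<open>\<open>X\<^sub>n\<close> only depends on the finitely many rotors on \<open>words_le d n\<close>, so it factors through a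
  map into the countable space of their values.\<close>

lemma measurable_rpos[measurable]: "(\<lambda>\<rho>. rpos d \<rho> n) \<in> measurable rotor_space (count_space UNIV)"
proof -
  obtain l where l: "set l = words_le d n" using finite_list[OF finite_words_le] by blast
  define dec where "dec = (\<lambda>ys w. case map_of (zip l ys) w of Some a \<Rightarrow> a | None \<Rightarrow> (0::nat))"
  have "\<forall>w\<in>words_le d n. \<rho> w = dec (map \<rho> l) w" for \<rho>
    unfolding dec_def using l by (simp add: map_of_zip_map)
  then have "rpos d \<rho> n = rpos d (dec (map \<rho> l)) n" for \<rho>
    using rotor_walk_local[of d n \<rho> "dec (map \<rho> l)" n] unfolding rpos_def by simp
  then have "(\<lambda>\<rho>. rpos d \<rho> n) = (\<lambda>\<rho>. (\<lambda>ys. rpos d (dec ys) n) (map \<rho> l))" by (simp add: fun_eq_iff)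
  then show ?thesis using measurable_count_space_comp[OF measurable_map, of "\<lambda>ys. rpos d (dec ys) n" l] by simp
qed

lemma measurable_rtau[measurable]: "(\<lambda>\<rho>. rtau d \<rho> k) \<in> measurable rotor_space (count_space UNIV)"
proof (induction k)
  case 0 then show ?case by simp
next
  case (Suc k)
  have "(\<lambda>\<rho>. n > rtau d \<rho> k \<and> rpos d \<rho> n = None) \<in> measurable rotor_space (count_space UNIV)" for n
  proof -
    have "(\<lambda>\<rho>. (\<lambda>m. n > m \<and> rpos d \<rho> n = None) (rtau d \<rho> k)) \<in> measurable rotor_space (count_space UNIV)"
    proof (rule measurable_compose_countable[OF _ Suc])
      fix i :: nat
      show "(\<lambda>\<rho>. n > i \<and> rpos d \<rho> n = None) \<in> measurable rotor_space (count_space UNIV)"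
        using measurable_count_space_comp[OF measurable_rpos, of "\<lambda>p. n > i \<and> p = None" d n] by simp
    qed
    then show ?thesis by simp
  qed
  then show ?case by (simp only: rtau.simps) (rule measurable_Least, blast)
qed

lemma measurable_rrange_mem: "Measurable.pred rotor_space (\<lambda>\<rho>. v \<in> rrange d \<rho> (rtau d \<rho> k))"
proof -
  have "(\<lambda>\<rho>. (\<lambda>T. \<exists>m\<le>T. rpos d \<rho> m = Some v) (rtau d \<rho> k)) \<in> measurable rotor_space (count_space UNIV)"
    by (rule measurable_compose_countable[OF _ measurable_rtau]) measurable
  then show ?thesis unfolding rrange_def by simp
qed

lemma measurable_return_contour: "(\<lambda>\<rho>. return_contour d k \<rho> x) \<in> borel_measurable rotor_space"
proof (cases "k = 0")
  case True then show ?thesis unfolding return_contour_def by simp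
next
  case False
  define P where "P = (\<lambda>n \<rho>. n \<ge> 1 \<and> map x [0..<n] \<notin> rrange d \<rho> (rtau d \<rho> k))"
  have Pm: "Measurable.pred rotor_space (P n)" for n
  proof -
    have "Measurable.pred rotor_space (\<lambda>\<rho>. \<not> map x [0..<n] \<in> rrange d \<rho> (rtau d \<rho> k))"
      using measurable_rrange_mem by (rule pred_intros_logic)
    then show ?thesis unfolding P_def by (cases "n \<ge> 1") simp_all
  qed
  have Q: "Measurable.pred rotor_space (\<lambda>\<rho>. \<exists>n. P n \<rho>)" using Pm by (rule pred_intros_countable)
  have L: "(\<lambda>\<rho>. LEAST n. P n \<rho>) \<in> measurable rotor_space (count_space UNIV)" using Pm by (rule measurable_Least)
  define h where "h = (\<lambda>\<rho>. if \<exists>n. P n \<rho> then Some (LEAST n. P n \<rho>) else None)"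
  have hm: "h \<in> measurable rotor_space (count_space UNIV)"
    unfolding h_def by (rule measurable_If[OF measurable_count_space_comp[OF L] measurable_const Q[unfolded pred_def]]) simp
  define F where "F = (\<lambda>z. case z of Some n \<Rightarrow> (of_nat n :: ennreal) | None \<Rightarrow> \<infinity>)"
  have "(\<lambda>\<rho>. F (h \<rho>)) \<in> borel_measurable rotor_space"
    by (rule measurable_compose[OF hm]) simp
  moreover have "return_contour d k \<rho> x = F (h \<rho>)" for \<rho>
    unfolding return_contour_def contour_def F_def h_def P_def using False by simp
  ultimately show ?thesis by simp
qed

lemma measurable_rotor_pred: "Measurable.pred rotor_space (\<lambda>\<rho>. P (\<rho> v))"
  using measurable_count_space_comp[of "\<lambda>\<rho>. \<rho> v" rotor_space P] measurable_component_singleton[of v UNIV "\<lambda>_. count_space UNIV"] by simp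

lemma measurable_exploration_within: "Measurable.pred rotor_space (\<lambda>\<rho>. exploration_within d n \<rho> v)"
proof (induction n arbitrary: v)
  case 0 then show ?case by simp
next
  case (Suc n)
  note [measurable] = Suc measurable_rotor_pred
  show ?case by simp
qed

section \<open>The i.i.d.\ rotor law\<close>

lemma sets_rotor_law: "sets (rotor_law r) = sets rotor_space"
  unfolding rotor_law_def by (rule sets_PiM_cong) simp_all

lemma space_rotor_law: "space (rotor_law r) = UNIV"
  unfolding rotor_law_def by (simp add: space_PiM)

lemma measurable_rotor_law: "f \<in> measurable rotor_space N \<Longrightarrow> f \<in> measurable (rotor_law r) N"
  using measurable_cong_sets[OF sets_rotor_law refl] by blast

lemma sets_rotor_law_Collect: "Measurable.pred rotor_space P \<Longrightarrow> {\<rho>. P \<rho>} \<in> sets (rotor_law r)"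
  unfolding pred_def sets_rotor_law by (simp add: space_PiM)

lemma prob_space_rotor_law: "prob_space (rotor_law r)"
  unfolding rotor_law_def by (rule prob_space_PiM) (simp add: prob_space_measure_pmf)

lemma measurable_rotor_shift: "(\<lambda>\<rho>. \<rho> \<circ> (@) w) \<in> measurable (rotor_law r) (rotor_law r)"
  unfolding rotor_law_def by (rule measurable_PiM_single') (auto intro!: measurable_component_singleton)

lemma measurable_rotor_component: "(\<lambda>\<rho>. \<rho> v) \<in> measurable (rotor_law r) (measure_pmf r)"
  unfolding rotor_law_def by (rule measurable_component_singleton) simp

lemma distr_rotor_law_shift: "distr (rotor_law r) (rotor_law r) (\<lambda>\<rho>. \<rho> \<circ> (@) w) = rotor_law r"
proof -
  have "distr (PiM UNIV (\<lambda>_. measure_pmf r)) (\<Pi>\<^sub>M i\<in>UNIV. measure_pmf r) (\<lambda>\<omega>. \<lambda>n\<in>UNIV. \<omega> (w @ n))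
      = (\<Pi>\<^sub>M i\<in>UNIV. measure_pmf r)"
    by (rule distr_PiM_reindex[of UNIV "\<lambda>_. measure_pmf r" "(@) w" UNIV, simplified])
       (auto simp: prob_space_measure_pmf inj_on_def)
  moreover have "(\<lambda>\<omega>. \<lambda>n\<in>UNIV. \<omega> (w @ n)) = (\<lambda>\<rho>::nat list \<Rightarrow> nat. \<rho> \<circ> (@) w)"
    by (simp add: restrict_def fun_eq_iff)
  ultimately show ?thesis unfolding rotor_law_def by simp
qed

lemma distr_rotor_law_component: "distr (rotor_law r) (measure_pmf r) (\<lambda>\<rho>. \<rho> v) = measure_pmf r"
  unfolding rotor_law_def by (rule distr_PiM_component) (simp_all add: prob_space_measure_pmf)

lemma prob_rotor_shift:
  assumes "Measurable.pred rotor_space Q"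
  shows "measure (rotor_law r) {\<rho>. Q (\<rho> \<circ> (@) w)} = measure (rotor_law r) {\<rho>. Q \<rho>}"
proof -
  have "measure (rotor_law r) {\<rho>. Q \<rho>} = measure (distr (rotor_law r) (rotor_law r) (\<lambda>\<rho>. \<rho> \<circ> (@) w)) {\<rho>. Q \<rho>}"
    by (simp only: distr_rotor_law_shift)
  also have "\<dots> = measure (rotor_law r) ((\<lambda>\<rho>. \<rho> \<circ> (@) w) -` {\<rho>. Q \<rho>} \<inter> space (rotor_law r))"
    by (rule measure_distr[OF measurable_rotor_shift sets_rotor_law_Collect[OF assms]])
  finally show ?thesis by (simp add: space_rotor_law)
qed

lemma prob_rotor_eq: "measure (rotor_law r) {\<rho>. \<rho> v = a} = pmf r a"
proof -
  have "pmf r a = measure (distr (rotor_law r) (measure_pmf r) (\<lambda>\<rho>. \<rho> v)) {a}"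
    by (simp only: distr_rotor_law_component measure_pmf_single)
  also have "\<dots> = measure (rotor_law r) ((\<lambda>\<rho>. \<rho> v) -` {a} \<inter> space (rotor_law r))"
    by (rule measure_distr[OF measurable_rotor_component]) simp
  finally show ?thesis by (simp add: space_rotor_law vimage_def)
qed

lemma indep_vars_rotors: "prob_space.indep_vars (rotor_law r) (\<lambda>_. measure_pmf r) (\<lambda>w \<omega>. \<omega> w) UNIV"
proof -
  interpret prob_space "rotor_law r" by (rule prob_space_rotor_law)
  show ?thesis
  proof (subst indep_vars_iff_distr_eq_PiM[OF _ measurable_rotor_component])
    have "(\<lambda>x. \<lambda>i\<in>UNIV. x i) = (\<lambda>x::nat list \<Rightarrow> nat. x)" by (simp add: fun_eq_iff)
    then show "distr (rotor_law r) (\<Pi>\<^sub>M i\<in>UNIV. measure_pmf r) (\<lambda>x. \<lambda>i\<in>UNIV. x i) =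
        (\<Pi>\<^sub>M i\<in>UNIV. distr (rotor_law r) (measure_pmf r) (\<lambda>\<omega>. \<omega> i))"
      unfolding distr_rotor_law_component by (simp add: rotor_law_def)
  qed simp
qed

lemma prob_root_children_indep:
  assumes "finite C" and Q: "Measurable.pred rotor_space Q"
  shows "measure (rotor_law r) ({\<rho>. \<rho> [] = a} \<inter> (\<Inter>c\<in>C. {\<rho>. Q (\<rho> \<circ> Cons c)})) =
    pmf r a * measure (rotor_law r) {\<rho>. Q \<rho>} ^ card C"
proof -
  let ?M = "rotor_law r"
  interpret P: prob_space ?M by (rule prob_space_rotor_law)
  define K where "K = (\<lambda>j::nat option. case j of None \<Rightarrow> {[]::nat list} | Some c \<Rightarrow> range (Cons c))"
  let ?X = "\<lambda>j \<omega>. restrict \<omega> (K j)"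
  let ?Mj = "\<lambda>j. PiM (K j) (\<lambda>_. measure_pmf r)"
  define F where "F = (\<lambda>j. case j of None \<Rightarrow> {\<rho>. \<rho> [] = a} | Some c \<Rightarrow> {\<rho>. Q (\<rho> \<circ> Cons c)})"
  have "disjoint_family_on K UNIV"
    unfolding disjoint_family_on_def K_def by (auto split: option.splits)
  then have "P.indep_vars ?Mj ?X UNIV"
    using P.indep_vars_restrict[OF indep_vars_rotors] by simp
  then have indep: "P.indep_sets (\<lambda>j. sigma_sets (space ?M) {?X j -` S \<inter> space ?M | S. S \<in> sets (?Mj j)}) UNIV"
    unfolding P.indep_vars_def by blast
  have F_root: "F None \<in> sigma_sets (space ?M) {?X None -` S \<inter> space ?M | S. S \<in> sets (?Mj None)}"
  proof -
    have "{f \<in> space (?Mj None). f [] \<in> {a}} \<in> sets (?Mj None)"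
      by (rule sets_Collect_single) (simp_all add: K_def)
    moreover have "F None = ?X None -` {f \<in> space (?Mj None). f [] \<in> {a}} \<inter> space ?M"
      unfolding F_def K_def by (auto simp: space_rotor_law space_PiM)
    ultimately show ?thesis by blast
  qed
  have F_child: "F (Some c) \<in> sigma_sets (space ?M) {?X (Some c) -` S \<inter> space ?M | S. S \<in> sets (?Mj (Some c))}" for c
  proof -
    have "(\<lambda>f u. f (c # u)) \<in> measurable (?Mj (Some c)) rotor_space"
    proof (rule measurable_PiM_single')
      fix u :: "nat list"
      have "(\<lambda>f. f (c # u)) \<in> measurable (?Mj (Some c)) (measure_pmf r)"
        by (rule measurable_component_singleton) (simp add: K_def)
      then show "(\<lambda>f. f (c # u)) \<in> measurable (?Mj (Some c)) (count_space UNIV)"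
        by (simp add: measurable_def)
    qed simp
    from measurable_compose[OF this Q]
    have "{f \<in> space (?Mj (Some c)). Q (\<lambda>u. f (c # u))} \<in> sets (?Mj (Some c))"
      unfolding pred_def by simp
    moreover have "F (Some c) = ?X (Some c) -` {f \<in> space (?Mj (Some c)). Q (\<lambda>u. f (c # u))} \<inter> space ?M"
      unfolding F_def K_def by (auto simp: space_rotor_law space_PiM comp_def)
    ultimately show ?thesis by blast
  qed
  have prob_child: "P.prob {\<rho>. Q (\<rho> \<circ> Cons c)} = P.prob {\<rho>. Q \<rho>}" for c
  proof -
    have "(@) [c] = Cons c" by (simp add: fun_eq_iff)
    then show ?thesis using prob_rotor_shift[OF Q, where r=r and w="[c]"] by simp
  qed
  let ?J = "insert None (Some ` C)"
  have "P.prob (\<Inter>j\<in>?J. F j) = (\<Prod>j\<in>?J. P.prob (F j))"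
    by (rule P.indep_setsD[OF indep]) (auto simp: assms(1) F_root F_child split: option.splits)
  moreover have "(\<Inter>j\<in>?J. F j) = {\<rho>. \<rho> [] = a} \<inter> (\<Inter>c\<in>C. {\<rho>. Q (\<rho> \<circ> Cons c)})"
    unfolding F_def by auto
  moreover have "(\<Prod>j\<in>?J. P.prob (F j)) = pmf r a * P.prob {\<rho>. Q \<rho>} ^ card C"
    using assms(1) by (simp add: prod.reindex F_def prob_child prob_rotor_eq card_image)
  ultimately show ?thesis by simp
qed

definition explored_children :: "nat \<Rightarrow> nat \<Rightarrow> nat set" where
  "explored_children d a = {c. c < d \<and> explores d a c}"

lemma finite_explored_children [simp]: "finite (explored_children d a)"
  unfolding explored_children_def by simp

lemma card_explored_children: "a \<le> d \<Longrightarrow> card (explored_children d a) = d - a"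
proof -
  assume a: "a \<le> d"
  have "explored_children d a = {..<d - a}"
  proof (cases "a = d")
    case True then show ?thesis unfolding explored_children_def explores_def rotor_succ_def by auto
  next
    case False
    then have "rotor_succ d a = a + 1" using a unfolding rotor_succ_def by simp
    then show ?thesis unfolding explored_children_def explores_def using a False by auto
  qed
  then show ?thesis by simp
qed

text \<open>The depth-bounded exploration below the root is a Galton--Watson process: the root rotor
  \<open>a\<close> has law \<open>r\<close> and determines the \<open>d - a\<close> children that are explored, below which
  independent copies of the same process run.\<close>

lemma prob_exploration_within_Suc:
  assumes "set_pmf r \<subseteq> {0..d}"
  shows "measure (rotor_law r) {\<rho>. exploration_within d (Suc n) \<rho> []} =
    (\<Sum>a\<in>{..d}. pmf r a * measure (rotor_law r) {\<rho>. exploration_within d n \<rho> []} ^ (d - a))"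
proof -
  let ?M = "rotor_law r"
  interpret P: prob_space ?M by (rule prob_space_rotor_law)
  let ?Q = "\<lambda>\<rho>. exploration_within d n \<rho> []"
  define E where "E = (\<lambda>a. {\<rho>. \<rho> [] = a} \<inter> (\<Inter>c\<in>explored_children d a. {\<rho>. ?Q (\<rho> \<circ> Cons c)}))"
  have Q: "Measurable.pred rotor_space ?Q" by (rule measurable_exploration_within)
  have sets_child: "{\<rho>. ?Q (\<rho> \<circ> Cons c)} \<in> P.events" for c
    using measurable_sets[OF measurable_rotor_shift[of "[c]" r] sets_rotor_law_Collect[OF Q]]
    by (simp add: space_rotor_law comp_def vimage_def)
  have sets_E: "E a \<in> P.events" for a
  proof -
    have "UNIV \<in> P.events" using sets.top[of ?M] by (simp add: space_rotor_law)
    then show ?thesis unfolding E_def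
      using sets_child sets_rotor_law_Collect[OF measurable_rotor_pred]
      by (intro sets.Int sets.countable_INT'' countableI_type) auto
  qed
  have "AE a in measure_pmf r. a \<in> {..d}" using assms by (auto simp: AE_measure_pmf_iff)
  then have "AE a in distr ?M (measure_pmf r) (\<lambda>\<rho>. \<rho> []). a \<in> {..d}"
    by (simp only: distr_rotor_law_component)
  then have "AE \<rho> in ?M. \<rho> [] \<in> {..d}" by (rule AE_distrD[OF measurable_rotor_component])
  then have "P.prob {\<rho>. exploration_within d (Suc n) \<rho> []} = P.prob (\<Union>a\<in>{..d}. E a)"
    by (intro measure_eq_AE sets_rotor_law_Collect measurable_exploration_within sets.finite_UN sets_E)
       (auto simp: E_def explored_children_def exploration_within_Suc_root simp del: exploration_within.simps)
  also have "\<dots> = (\<Sum>a\<in>{..d}. P.prob (E a))"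
  proof (rule P.finite_measure_finite_Union)
    show "E ` {..d} \<subseteq> P.events" using sets_E by blast
    show "disjoint_family_on E {..d}" unfolding disjoint_family_on_def E_def by auto
  qed simp
  also have "\<dots> = (\<Sum>a\<in>{..d}. pmf r a * P.prob {\<rho>. ?Q \<rho>} ^ (d - a))"
    unfolding E_def
    by (intro sum.cong refl) (simp add: prob_root_children_indep[OF _ Q] card_explored_children)
  finally show ?thesis .
qed

section \<open>Recurrence: excursions are almost surely finite\<close>

lemma Bernoulli_inequality_strict:
  fixes t :: real
  assumes "m \<ge> 2" "0 < t" "t \<le> 1"
  shows "1 - real m * t < (1 - t) ^ m"
  using assms(1)
proof (induction m rule: nat_induct_at_least)
  case base
  have "(1 - t) ^ 2 = 1 - 2 * t + t * t" by (simp add: power2_eq_square algebra_simps)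
  then show ?case using assms by simp
next
  case (Suc n)
  have "(1 - t) * (1 - real n * t) \<le> (1 - t) * (1 - t) ^ n"
    using Suc.IH assms by (intro mult_left_mono) auto
  moreover have "(1 - t) * (1 - real n * t) = 1 - real (Suc n) * t + real n * t * t"
    by (simp add: algebra_simps)
  moreover have "real n * t * t > 0" using Suc.hyps assms by simp
  ultimately show ?case by simp
qed

lemma offspring_two_exists:
  fixes p :: "nat \<Rightarrow> real"
  assumes nonneg: "\<forall>a. p a \<ge> 0" and sum1: "(\<Sum>a\<in>{..d}. p a) = 1" and pd: "p d > 0"
    and mean: "(\<Sum>a\<in>{..d}. p a * real (d - a)) \<ge> 1"
  shows "\<exists>a\<le>d. p a > 0 \<and> d - a \<ge> 2"
proof (rule ccontr)
  assume none: "\<not> (\<exists>a\<le>d. p a > 0 \<and> d - a \<ge> 2)"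
  have small: "p a * real (d - a) \<le> (if a = d then 0 else p a)" if "a \<le> d" for a
  proof (cases "a = d \<or> p a = 0")
    case True
    then show ?thesis using nonneg by auto
  next
    case False
    then have "p a > 0" using nonneg[rule_format, of a] by simp
    then have "d - a < 2" using none that by auto
    then have "real (d - a) \<le> 1" by simp
    then show ?thesis using False nonneg by (simp add: mult_left_le)
  qed
  have "(\<Sum>a\<in>{..d}. p a * real (d - a)) \<le> (\<Sum>a\<in>{..d}. if a = d then 0 else p a)"
    by (rule sum_mono) (use small in auto)
  also have "\<dots> = 1 - p d"
    using sum.remove[of "{..d}" d p] sum1 by (simp add: sum.If_cases Diff_eq Compl_eq)
  finally show False using mean pd by simp
qed

text \<open>Bernoulli's inequality bounds the offspring generating function below by its tangent
  \<open>1 - (1 - s) \<mu>\<close> at \<open>s = 1\<close>, which lies above the diagonal as \<open>\<mu> \<le> 1\<close>; when \<open>\<mu> = 1\<close>, strictness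
  comes from an offspring number \<open>\<ge> 2\<close>, forced by \<open>p d > 0\<close>.\<close>

lemma offspring_gf_gt:
  fixes p :: "nat \<Rightarrow> real" and s :: real
  assumes nonneg: "\<forall>a. p a \<ge> 0" and sum1: "(\<Sum>a\<in>{..d}. p a) = 1"
    and mean: "(\<Sum>a\<in>{..d}. p a * real (d - a)) \<le> 1" and pd: "p d > 0"
    and s: "0 \<le> s" "s < 1"
  shows "s < (\<Sum>a\<in>{..d}. p a * s ^ (d - a))"
proof -
  define t where "t = 1 - s"
  define \<mu> where "\<mu> = (\<Sum>a\<in>{..d}. p a * real (d - a))"
  have t: "0 < t" "t \<le> 1" using s unfolding t_def by auto
  have bern: "p a * (1 - real (d - a) * t) \<le> p a * s ^ (d - a)" for a
    using Bernoulli_inequality[of "- t" "d - a"] t nonneg unfolding t_def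
    by (intro mult_left_mono) (auto simp: algebra_simps)
  have linear: "(\<Sum>a\<in>{..d}. p a * (1 - real (d - a) * t)) = 1 - t * \<mu>"
  proof -
    have "(\<Sum>a\<in>{..d}. p a * (1 - real (d - a) * t)) = (\<Sum>a\<in>{..d}. p a - t * (p a * real (d - a)))"
      by (rule sum.cong) (simp_all add: algebra_simps del: of_nat_diff)
    also have "\<dots> = (\<Sum>a\<in>{..d}. p a) - t * \<mu>"
      unfolding \<mu>_def by (simp only: sum_subtractf sum_distrib_left)
    finally show ?thesis using sum1 by simp
  qed
  have "0 \<le> t * (1 - \<mu>)" using t mean unfolding \<mu>_def by simp
  then have "s \<le> 1 - t * \<mu>" unfolding t_def by (simp add: algebra_simps)
  consider "\<mu> < 1" | "\<mu> = 1" using mean unfolding \<mu>_def by fastforce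
  then show ?thesis
  proof cases
    case 1
    then have "0 < t * (1 - \<mu>)" using t by simp
    then have "s < 1 - t * \<mu>" unfolding t_def by (simp add: algebra_simps)
    also have "\<dots> \<le> (\<Sum>a\<in>{..d}. p a * s ^ (d - a))"
      unfolding linear[symmetric] by (rule sum_mono) (rule bern)
    finally show ?thesis .
  next
    case 2
    then obtain a0 where a0: "a0 \<le> d" "p a0 > 0" "d - a0 \<ge> 2"
      using offspring_two_exists[OF nonneg sum1 pd] unfolding \<mu>_def by auto
    have "1 - real (d - a0) * t < s ^ (d - a0)"
      using Bernoulli_inequality_strict[OF a0(3) t] unfolding t_def by simp
    then have strict: "p a0 * (1 - real (d - a0) * t) < p a0 * s ^ (d - a0)" using a0(2) by simp
    have "1 - t * \<mu> < (\<Sum>a\<in>{..d}. p a * s ^ (d - a))"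
      unfolding linear[symmetric]
    proof (rule sum_strict_mono_ex1)
      show "\<forall>a\<in>{..d}. p a * (1 - real (d - a) * t) \<le> p a * s ^ (d - a)" using bern by blast
      show "\<exists>a\<in>{..d}. p a * (1 - real (d - a) * t) < p a * s ^ (d - a)" using a0(1) strict by blast
    qed simp
    with \<open>s \<le> 1 - t * \<mu>\<close> show ?thesis by simp
  qed
qed

lemma incseq_iterate_tendsto_1:
  fixes q :: "nat \<Rightarrow> real"
  assumes "incseq q" "\<And>n. q n \<le> 1" "0 \<le> q 0" "\<And>n. q (Suc n) = f (q n)" "continuous_on {0..1} f"
    and above: "\<And>s. 0 \<le> s \<Longrightarrow> s < 1 \<Longrightarrow> s < f s"
  shows "q \<longlonglongrightarrow> 1"
proof -
  obtain L where L: "q \<longlonglongrightarrow> L" "\<And>n. q n \<le> L"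
    using incseq_convergent[OF assms(1), of 1] assms(2) by auto
  have L_range: "L \<in> {0..1}"
    using L(1) assms(2) order_trans[OF assms(3) L(2)] by (auto intro: LIMSEQ_le_const2)
  have "(\<lambda>n. f (q n)) \<longlonglongrightarrow> f L"
    using continuous_on_tendsto_compose[OF assms(5) L(1) L_range] assms(1-3)
    using order_trans[OF assms(3) incseqD[OF assms(1)]] by auto
  moreover have "(\<lambda>n. f (q n)) \<longlonglongrightarrow> L" using LIMSEQ_Suc[OF L(1)] assms(4) by simp
  ultimately have "f L = L" using LIMSEQ_unique by blast
  then have "L = 1" using above[of L] L_range by force
  then show ?thesis using L(1) by simp
qed

lemma offspring_mean_le_1:
  assumes "set_pmf r \<subseteq> {0..d}" "measure_pmf.expectation r real \<ge> real d - 1"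
  shows "(\<Sum>a\<in>{..d}. pmf r a * real (d - a)) \<le> 1"
proof -
  have supp: "set_pmf r \<subseteq> {..d}" using assms(1) by auto
  have sum1: "(\<Sum>a\<in>{..d}. pmf r a) = 1" by (rule sum_pmf_eq_1[OF _ supp]) simp
  have E: "measure_pmf.expectation r real = (\<Sum>a\<in>{..d}. pmf r a * real a)"
    by (subst integral_measure_pmf[of "{..d}"]) (use supp in auto)
  have "(\<Sum>a\<in>{..d}. pmf r a * real (d - a)) = (\<Sum>a\<in>{..d}. real d * pmf r a - pmf r a * real a)"
    by (rule sum.cong) (auto simp: of_nat_diff algebra_simps)
  also have "\<dots> = real d - measure_pmf.expectation r real"
    by (simp add: sum_subtractf sum_distrib_left[symmetric] sum1 E)
  finally show ?thesis using assms(2) by simp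
qed

lemma prob_exploration_within_tendsto_1:
  assumes "set_pmf r \<subseteq> {0..d}" "measure_pmf.expectation r real \<ge> real d - 1" "pmf r d > 0"
  shows "(\<lambda>n. measure (rotor_law r) {\<rho>. exploration_within d n \<rho> []}) \<longlonglongrightarrow> 1"
proof (rule incseq_iterate_tendsto_1)
  interpret P: prob_space "rotor_law r" by (rule prob_space_rotor_law)
  have "set_pmf r \<subseteq> {..d}" using assms(1) by auto
  then have sum1: "(\<Sum>a\<in>{..d}. pmf r a) = 1" by (rule sum_pmf_eq_1[rotated]) simp
  show "incseq (\<lambda>n. P.prob {\<rho>. exploration_within d n \<rho> []})"
    by (intro incseq_SucI P.finite_measure_mono sets_rotor_law_Collect measurable_exploration_within)
       (auto intro: exploration_within_Suc simp del: exploration_within.simps)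
  show "P.prob {\<rho>. exploration_within d (Suc n) \<rho> []} =
      (\<lambda>s. \<Sum>a\<in>{..d}. pmf r a * s ^ (d - a)) (P.prob {\<rho>. exploration_within d n \<rho> []})" for n
    using prob_exploration_within_Suc[OF assms(1)] by simp
  show "s < (\<Sum>a\<in>{..d}. pmf r a * s ^ (d - a))" if "0 \<le> s" "s < 1" for s
    using offspring_gf_gt[OF _ sum1 offspring_mean_le_1[OF assms(1,2)] assms(3) that] by simp
qed (auto intro!: continuous_intros prob_space.prob_le_1[OF prob_space_rotor_law])

lemma AE_finite_exploration:
  assumes "set_pmf r \<subseteq> {0..d}" "measure_pmf.expectation r real \<ge> real d - 1" "pmf r d > 0"
  shows "AE \<rho> in rotor_law r. \<forall>w. finite_exploration d \<rho> w"
proof -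
  let ?M = "rotor_law r"
  interpret P: prob_space ?M by (rule prob_space_rotor_law)
  let ?A = "\<lambda>n. {\<rho>. exploration_within d n \<rho> []}"
  have sets_A: "?A n \<in> P.events" for n
    by (rule sets_rotor_law_Collect[OF measurable_exploration_within])
  have "(\<lambda>n. P.prob (?A n)) \<longlonglongrightarrow> P.prob (\<Union>n. ?A n)"
    using sets_A by (intro P.finite_Lim_measure_incseq incseq_SucI)
       (auto intro: exploration_within_Suc simp del: exploration_within.simps)
  then have "P.prob (\<Union>n. ?A n) = 1"
    using prob_exploration_within_tendsto_1[OF assms] LIMSEQ_unique by blast
  then have "AE \<rho> in ?M. \<rho> \<in> (\<Union>n. ?A n)"
    by (subst P.AE_in_set_eq_1) (use sets_A in auto)
  then have root: "AE \<rho> in ?M. finite_exploration d \<rho> []"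
    by eventually_elim (auto intro: exploration_within_finite)
  have "AE \<rho> in ?M. finite_exploration d \<rho> w" for w
  proof -
    have "AE \<rho> in distr ?M ?M (\<lambda>\<rho>. \<rho> \<circ> (@) w). finite_exploration d \<rho> []"
      unfolding distr_rotor_law_shift by (rule root)
    then have "AE \<rho> in ?M. finite_exploration d (\<rho> \<circ> (@) w) []"
      by (rule AE_distrD[OF measurable_rotor_shift])
    then show ?thesis by eventually_elim (use finite_exploration_append[of d _ w "[]"] in simp)
  qed
  then show ?thesis by (simp add: AE_all_countable)
qed

section \<open>Conditioning on the root rotor\<close>

definition rotor_law_nonroot :: "nat pmf \<Rightarrow> (nat list \<Rightarrow> nat) measure" where
  "rotor_law_nonroot r = PiM (UNIV - {[]}) (\<lambda>_. measure_pmf r)"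

lemma prob_space_rotor_law_nonroot: "prob_space (rotor_law_nonroot r)"
  unfolding rotor_law_nonroot_def by (rule prob_space_PiM) (simp add: prob_space_measure_pmf)

lemma measurable_insert_root:
  "(\<lambda>(a, X). X([] := a)) \<in> measurable (measure_pmf r \<Otimes>\<^sub>M rotor_law_nonroot r) (rotor_law r)"
  unfolding rotor_law_def
proof (rule measurable_PiM_single')
  fix w :: "nat list"
  let ?N = "measure_pmf r \<Otimes>\<^sub>M rotor_law_nonroot r"
  show "(\<lambda>p. (case p of (a, X) \<Rightarrow> X([] := a)) w) \<in> measurable ?N (measure_pmf r)"
  proof (cases "w = []")
    case True
    then show ?thesis by (simp add: case_prod_beta')
  next
    case False
    have "(\<lambda>X. X w) \<in> measurable (rotor_law_nonroot r) (measure_pmf r)"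
      unfolding rotor_law_nonroot_def using False by (intro measurable_component_singleton) auto
    then have "(\<lambda>p. snd p w) \<in> measurable ?N (measure_pmf r)"
      by (rule measurable_compose[OF measurable_snd])
    then show ?thesis using False by (simp add: case_prod_beta')
  qed
qed (simp add: space_PiM)

lemma distr_rotor_law_insert_root:
  "distr (measure_pmf r \<Otimes>\<^sub>M rotor_law_nonroot r) (rotor_law r) (\<lambda>(a, X). X([] := a)) = rotor_law r"
proof -
  have "insert [] (UNIV - {[]}) = (UNIV :: nat list set)" by auto
  then show ?thesis
    using distr_pair_PiM_eq_PiM[of "UNIV - {[]}" "\<lambda>_. measure_pmf r" "[]"]
    unfolding rotor_law_def rotor_law_nonroot_def by (simp add: prob_space_measure_pmf)
qed

lemma measurable_nonroot_subtree: "(\<lambda>X. X \<circ> Cons i) \<in> measurable (rotor_law_nonroot r) (rotor_law r)"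
  unfolding rotor_law_def rotor_law_nonroot_def
  by (rule measurable_PiM_single') (auto intro!: measurable_component_singleton simp: space_PiM)

lemma distr_rotor_law_nonroot_subtree:
  "distr (rotor_law_nonroot r) (rotor_law r) (\<lambda>X. X \<circ> Cons i) = rotor_law r"
proof -
  have "(\<lambda>X. \<lambda>n\<in>UNIV. X (i # n)) = (\<lambda>X::nat list \<Rightarrow> nat. X \<circ> Cons i)"
    by (simp add: fun_eq_iff)
  then show ?thesis
    using distr_PiM_reindex[of "UNIV - {[]}" "\<lambda>_. measure_pmf r" "Cons i" UNIV]
    unfolding rotor_law_def rotor_law_nonroot_def by (simp add: prob_space_measure_pmf)
qed

text \<open>The rotors below child \<open>i\<close> are independent of \<open>\<rho> []\<close> and again i.i.d.\ with law \<open>r\<close>.\<close>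

lemma nn_integral_rotor_law_split:
  assumes G: "\<And>a. G a \<in> borel_measurable rotor_space"
  shows "(\<integral>\<^sup>+ \<rho>. G (\<rho> []) (\<rho> \<circ> Cons i) \<partial>rotor_law r) =
    (\<integral>\<^sup>+ a. (\<integral>\<^sup>+ \<tau>. G a \<tau> \<partial>rotor_law r) \<partial>measure_pmf r)"
proof -
  let ?M = "rotor_law r" and ?N = "rotor_law_nonroot r"
  interpret N: prob_space ?N by (rule prob_space_rotor_law_nonroot)
  have Gm: "G a \<in> borel_measurable ?M" for a using G measurable_rotor_law by blast
  let ?\<Phi> = "\<lambda>(a, X). X([] := a) :: nat list \<Rightarrow> nat"
  have jm: "(\<lambda>p. G (fst p) (snd p \<circ> Cons i)) \<in> borel_measurable (measure_pmf r \<Otimes>\<^sub>M ?N)"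
  proof (rule measurable_compose_countable[where f="\<lambda>a p. G a (snd p \<circ> Cons i)"])
    show "(\<lambda>p. G a (snd p \<circ> Cons i)) \<in> borel_measurable (measure_pmf r \<Otimes>\<^sub>M ?N)" for a
      by (rule measurable_compose[OF measurable_compose[OF measurable_snd measurable_nonroot_subtree] Gm])
    show "fst \<in> measurable (measure_pmf r \<Otimes>\<^sub>M ?N) (count_space UNIV)"
      using measurable_fst[of "measure_pmf r" ?N] by (simp add: measurable_def)
  qed
  have "(\<lambda>\<rho>. G (\<rho> []) (\<rho> \<circ> Cons i)) \<in> borel_measurable ?M"
  proof (rule measurable_compose_countable[where f="\<lambda>a \<rho>. G a (\<rho> \<circ> Cons i)"])
    show "(\<lambda>\<rho>. G a (\<rho> \<circ> Cons i)) \<in> borel_measurable ?M" for a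
      using measurable_compose[OF measurable_rotor_shift[of "[i]" r] Gm] by (simp add: comp_def)
    show "(\<lambda>\<rho>. \<rho> []) \<in> measurable ?M (count_space UNIV)"
      using measurable_rotor_component[of "[]" r] by (simp add: measurable_def)
  qed
  then have "(\<integral>\<^sup>+ \<rho>. G (\<rho> []) (\<rho> \<circ> Cons i) \<partial>?M) =
      (\<integral>\<^sup>+ p. G (?\<Phi> p []) (?\<Phi> p \<circ> Cons i) \<partial>(measure_pmf r \<Otimes>\<^sub>M ?N))"
    by (subst (1) distr_rotor_law_insert_root[symmetric])
       (rule nn_integral_distr[OF measurable_insert_root], simp add: distr_rotor_law_insert_root)
  also have "\<dots> = (\<integral>\<^sup>+ p. G (fst p) (snd p \<circ> Cons i) \<partial>(measure_pmf r \<Otimes>\<^sub>M ?N))"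
    by (rule nn_integral_cong) (auto simp: comp_def split: prod.splits)
  also have "\<dots> = (\<integral>\<^sup>+ a. (\<integral>\<^sup>+ X. G a (X \<circ> Cons i) \<partial>?N) \<partial>measure_pmf r)"
    using N.nn_integral_fst[OF jm] by simp
  also have "\<dots> = (\<integral>\<^sup>+ a. (\<integral>\<^sup>+ \<tau>. G a \<tau> \<partial>?M) \<partial>measure_pmf r)"
    using nn_integral_distr[OF measurable_nonroot_subtree[where i=i and r=r], of "G _"]
    by (simp add: distr_rotor_law_nonroot_subtree Gm)
  finally show ?thesis .
qed

lemma measure_pmf_explores:
  assumes "set_pmf r \<subseteq> {0..d}" "i < d"
  shows "measure_pmf.prob r {a. explores d a i} = pcum r (d - i)"
proof -
  have "explores d a i \<longleftrightarrow> a < d - i" if "a \<le> d" for a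
    using that assms(2) unfolding explores_def rotor_succ_def by (cases "a = d") auto
  then have "{a. explores d a i} \<inter> set_pmf r = {..<d - i} \<inter> set_pmf r"
    using assms(1) by auto
  then have "measure_pmf.prob r {a. explores d a i} = measure_pmf.prob r {..<d - i}"
    by (metis measure_Int_set_pmf)
  also have "\<dots> = pcum r (d - i)" unfolding pcum_def by (simp add: measure_measure_pmf_finite)
  finally show ?thesis .
qed

lemma nn_integral_measure_pmf_If:
  "(\<integral>\<^sup>+ a. (if P a then u else v) \<partial>measure_pmf p) =
    ennreal (measure_pmf.prob p {a. P a}) * u + ennreal (1 - measure_pmf.prob p {a. P a}) * v"
proof -
  have "(\<integral>\<^sup>+ a. (if P a then u else v) \<partial>measure_pmf p) =
      (\<integral>\<^sup>+ a. u * indicator {a. P a} a + v * indicator (- {a. P a}) a \<partial>measure_pmf p)"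
    by (rule nn_integral_cong) (simp split: split_indicator)
  also have "\<dots> = u * emeasure (measure_pmf p) {a. P a} + v * emeasure (measure_pmf p) (- {a. P a})"
    by (subst nn_integral_add) (simp_all add: measurable_def nn_integral_cmult_indicator)
  also have "emeasure (measure_pmf p) (- {a. P a}) = ennreal (1 - measure_pmf.prob p {a. P a})"
    using measure_pmf.prob_compl[of "{a. P a}" p]
    by (simp add: measure_pmf.emeasure_eq_measure Compl_eq_Diff_UNIV)
  finally show ?thesis by (simp add: measure_pmf.emeasure_eq_measure mult.commute)
qed

lemma nn_integral_one_plus_return_contour:
  "(\<integral>\<^sup>+ \<tau>. 1 + return_contour d k \<tau> x \<partial>rotor_law r) = 1 + gfun d r k x"
proof -
  interpret prob_space "rotor_law r" by (rule prob_space_rotor_law)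
  have "(\<integral>\<^sup>+ \<tau>. 1 + return_contour d k \<tau> x \<partial>rotor_law r) =
      (\<integral>\<^sup>+ \<tau>. 1 \<partial>rotor_law r) + (\<integral>\<^sup>+ \<tau>. return_contour d k \<tau> x \<partial>rotor_law r)"
    by (rule nn_integral_add) (simp_all add: measurable_rotor_law[OF measurable_return_contour])
  then show ?thesis by (simp add: emeasure_space_1 gfun_def return_contour_def)
qed

theorem theoremA1:
  fixes d :: nat and r :: "nat pmf" and k i :: nat and x :: "nat \<Rightarrow> nat"
  assumes "d \<ge> 2"
    and "set_pmf r \<subseteq> {0..d}"
    and "measure_pmf.expectation r real \<ge> real d - 1"
    and "pmf r d > 0"
    and "k \<ge> 1"
    and "\<forall>n. x n < d"
    and "i < d"
  shows "gfun d r k (case_nat i x) =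
           1 + ennreal (1 - pcum r (d - i)) * gfun d r (k - 1) x
             + ennreal (pcum r (d - i)) * gfun d r k x"
proof -
  let ?C = "\<lambda>m \<tau>. return_contour d m \<tau> x"
  let ?G = "\<lambda>a \<tau>. 1 + (if explores d a i then ?C k \<tau> else ?C (k - 1) \<tau>)"
  have "gfun d r k (case_nat i x) = (\<integral>\<^sup>+ \<rho>. ?G (\<rho> []) (\<rho> \<circ> Cons i) \<partial>rotor_law r)"
    unfolding gfun_def using assms(5) AE_finite_exploration[OF assms(2-4)]
    by (auto intro!: nn_integral_cong_AE elim!: eventually_mono simp: return_contour_case_nat assms(7))
  also have "\<dots> = (\<integral>\<^sup>+ a. (\<integral>\<^sup>+ \<tau>. ?G a \<tau> \<partial>rotor_law r) \<partial>measure_pmf r)"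
  proof (rule nn_integral_rotor_law_split)
    show "?G a \<in> borel_measurable rotor_space" for a
      by (cases "explores d a i") (auto intro!: borel_measurable_add measurable_return_contour)
  qed
  also have "\<dots> = (\<integral>\<^sup>+ a. 1 + (if explores d a i then gfun d r k x else gfun d r (k - 1) x) \<partial>measure_pmf r)"
    by (intro nn_integral_cong) (simp add: nn_integral_one_plus_return_contour)
  also have "\<dots> = 1 + (\<integral>\<^sup>+ a. (if explores d a i then gfun d r k x else gfun d r (k - 1) x) \<partial>measure_pmf r)"
    by (subst nn_integral_add) (simp_all add: measurable_def measure_pmf.emeasure_space_1)
  finally show ?thesis
    by (simp add: nn_integral_measure_pmf_If measure_pmf_explores[OF assms(2,7)] ac_simps)
qed

end
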